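(* Every typed term is strongly normalizable: if $\Gamma \vdash t : A \,;\, \Delta$ is derivable in the type system described in the context, then there is no infinite sequence $(t_i)_{i<\omega}$ with $t_0 = t$ and $t_i \triangleright t_{i+1}$ for all $i$.
   Context: Types are built from propositional variables and the constant $\perp$ using $\to$, $\wedge$, $\vee$. There are two disjoint infinite sets of variables: $\lambda$-variables $x,y,\dots$ and $\mu$-variables $a,b,\dots$. Terms $\mathcal{T}$ and $\mathcal{E}$-terms $\mathcal{E}$ are given by $\mathcal{T} ::= x \mid \lambda x.\mathcal{T} \mid (\mathcal{T}\;\mathcal{E}) \mid \langle \mathcal{T},\mathcal{T}\rangle \mid \omega_1\mathcal{T} \mid \omega_2\mathcal{T} \mid \mu a.\mathcal{T} \mid (a\;\mathcal{T})$, $\mathcal{E} ::= \mathcal{T} \mid \pi_1 \mid \pi_2 \mid [x.\mathcal{T}, y.\mathcal{T}]$ ($\lambda x$ binds $x$, $\mu a$ binds $a$, and in $[x.u,y.v]$ $x$ is bound in $u$ and $y$ in $v$; terms are taken up to renaming of bound variables). Contexts $\Gamma$ (resp. $\Delta$) are sets of declarations $x:A$ (resp. $a:A$). Typing rules for judgments $\Gamma \vdash t : A \,;\, \Delta$: (ax) $\Gamma, x:A \vdash x:A;\Delta$; ($\to_i$) from $\Gamma,x:A\vdash t:B;\Delta$ infer $\Gamma\vdash \lambda x.t : A\to B;\Delta$; ($\to_e$) from $\Gamma\vdash u:A\to B;\Delta$ and $\Gamma\vdash v:A;\Delta$ infer $\Gamma\vdash (u\;v):B;\Delta$; ($\wedge_i$)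 from $\Gamma\vdash u:A;\Delta$ and $\Gamma\vdash v:B;\Delta$ infer $\Gamma\vdash\langle u,v\rangle : A\wedge B;\Delta$; ($\wedge_e^1$, $\wedge_e^2$) from $\Gamma\vdash t:A\wedge B;\Delta$ infer $\Gamma\vdash (t\;\pi_1):A;\Delta$ and $\Gamma\vdash (t\;\pi_2):B;\Delta$; ($\vee_i^1$, $\vee_i^2$) from $\Gamma\vdash t:A;\Delta$ infer $\Gamma\vdash\omega_1 t : A\vee B;\Delta$; from $\Gamma\vdash t:B;\Delta$ infer $\Gamma\vdash \omega_2 t:A\vee B;\Delta$; ($\vee_e$) from $\Gamma\vdash t:A\vee B;\Delta$, $\Gamma,x:A\vdash u:C;\Delta$, $\Gamma,y:B\vdash v:C;\Delta$ infer $\Gamma\vdash (t\;[x.u,y.v]):C;\Delta$; ($abs_i$) from $\Gamma\vdash t:A;\Delta,a:A$ infer $\Gamma\vdash (a\;t):\perp;\Delta,a:A$; ($abs_e$) from $\Gamma\vdash t:\perp;\Delta,a:A$ infer $\Gamma\vdash \mu a.t : A;\Delta$. A term is typed if $\Gamma\vdash t:A;\Delta$ is derivable for some $\Gamma,A,\Delta$. The one-step reduction $\triangleright$ on $\mathcal{E}$-terms is the closure under all term constructors of the rules: $(\lambda x.u\;v)\triangleright u[x:=v]$; $(\langle t_1,t_2\rangle\;\pi_i)\triangleright t_i$; $(\omega_i t\;[x_1.u_1,x_2.u_2])\triangleright u_i[x_i:=t]$; $((t\;[x_1.u_1,x_2.u_2])\;\varepsilon)\triangleright (t\;[x_1.(u_1\;\varepsilon),x_2.(u_2\;\varepsilon)])$;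 $(\mu a.t\;\varepsilon)\triangleright \mu a.t[a:=^*\varepsilon]$, where $\varepsilon$ is any $\mathcal{E}$-term and $t[a:=^*\varepsilon]$ is obtained from $t$ by replacing inductively each subterm of the form $(a\;v)$ by $(a\;(v\;\varepsilon))$. *)

theory Defs
  imports Main
begin

datatype ty = TVar nat | Bot | Imp ty ty | Conj ty ty | Disj ty ty

text \<open>Lambda-variables and mu-variables are represented by de Bruijn indices in two
  independent index spaces, so terms are identified up to renaming of bound variables.
  LVar i: lambda-variable; Lam binds a lambda-variable; Mu binds a mu-variable;
  MApp a t is (a t); Case u v is [x.u, y.v] and binds one lambda-variable in each branch;
  Inj1/Inj2 are omega_1/omega_2.\<close>

datatype trm =
    LVar nat
  | Lam trm
  | App trm elim
  | Pair trm trm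
  | Inj1 trm
  | Inj2 trm
  | Mu trm
  | MApp nat trm
and elim =
    ETm trm
  | Proj1
  | Proj2
  | Case trm trm

primrec lift_l :: "nat \<Rightarrow> trm \<Rightarrow> trm"
  and lift_lE :: "nat \<Rightarrow> elim \<Rightarrow> elim" where
  "lift_l k (LVar i) = (if i < k then LVar i else LVar (Suc i))"
| "lift_l k (Lam t) = Lam (lift_l (Suc k) t)"
| "lift_l k (App t e) = App (lift_l k t) (lift_lE k e)"
| "lift_l k (Pair t u) = Pair (lift_l k t) (lift_l k u)"
| "lift_l k (Inj1 t) = Inj1 (lift_l k t)"
| "lift_l k (Inj2 t) = Inj2 (lift_l k t)"
| "lift_l k (Mu t) = Mu (lift_l k t)"
| "lift_l k (MApp a t) = MApp a (lift_l k t)"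
| "lift_lE k (ETm t) = ETm (lift_l k t)"
| "lift_lE k Proj1 = Proj1"
| "lift_lE k Proj2 = Proj2"
| "lift_lE k (Case u v) = Case (lift_l (Suc k) u) (lift_l (Suc k) v)"

primrec lift_m :: "nat \<Rightarrow> trm \<Rightarrow> trm"
  and lift_mE :: "nat \<Rightarrow> elim \<Rightarrow> elim" where
  "lift_m k (LVar i) = LVar i"
| "lift_m k (Lam t) = Lam (lift_m k t)"
| "lift_m k (App t e) = App (lift_m k t) (lift_mE k e)"
| "lift_m k (Pair t u) = Pair (lift_m k t) (lift_m k u)"
| "lift_m k (Inj1 t) = Inj1 (lift_m k t)"
| "lift_m k (Inj2 t) = Inj2 (lift_m k t)"
| "lift_m k (Mu t) = Mu (lift_m (Suc k) t)"
| "lift_m k (MApp a t) = MApp (if a < k then a else Suc a) (lift_m k t)"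
| "lift_mE k (ETm t) = ETm (lift_m k t)"
| "lift_mE k Proj1 = Proj1"
| "lift_mE k Proj2 = Proj2"
| "lift_mE k (Case u v) = Case (lift_m k u) (lift_m k v)"

primrec subst :: "trm \<Rightarrow> nat \<Rightarrow> trm \<Rightarrow> trm"
  and substE :: "elim \<Rightarrow> nat \<Rightarrow> trm \<Rightarrow> elim" where
  "subst (LVar i) k v = (if i < k then LVar i else if i = k then v else LVar (i - 1))"
| "subst (Lam t) k v = Lam (subst t (Suc k) (lift_l 0 v))"
| "subst (App t e) k v = App (subst t k v) (substE e k v)"
| "subst (Pair t u) k v = Pair (subst t k v) (subst u k v)"
| "subst (Inj1 t) k v = Inj1 (subst t k v)"
| "subst (Inj2 t) k v = Inj2 (subst t k v)"
| "subst (Mu t) k v = Mu (subst t k (lift_m 0 v))"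
| "subst (MApp a t) k v = MApp a (subst t k v)"
| "substE (ETm t) k v = ETm (subst t k v)"
| "substE Proj1 k v = Proj1"
| "substE Proj2 k v = Proj2"
| "substE (Case u w) k v = Case (subst u (Suc k) (lift_l 0 v)) (subst w (Suc k) (lift_l 0 v))"

primrec msubst :: "trm \<Rightarrow> nat \<Rightarrow> elim \<Rightarrow> trm"
  and msubstE :: "elim \<Rightarrow> nat \<Rightarrow> elim \<Rightarrow> elim" where
  "msubst (LVar i) a e = LVar i"
| "msubst (Lam t) a e = Lam (msubst t a (lift_lE 0 e))"
| "msubst (App t f) a e = App (msubst t a e) (msubstE f a e)"
| "msubst (Pair t u) a e = Pair (msubst t a e) (msubst u a e)"
| "msubst (Inj1 t) a e = Inj1 (msubst t a e)"
| "msubst (Inj2 t) a e = Inj2 (msubst t a e)"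
| "msubst (Mu t) a e = Mu (msubst t (Suc a) (lift_mE 0 e))"
| "msubst (MApp b t) a e =
     (if b = a then MApp b (App (msubst t a e) e) else MApp b (msubst t a e))"
| "msubstE (ETm t) a e = ETm (msubst t a e)"
| "msubstE Proj1 a e = Proj1"
| "msubstE Proj2 a e = Proj2"
| "msubstE (Case u w) a e = Case (msubst u a (lift_lE 0 e)) (msubst w a (lift_lE 0 e))"

text \<open>Contexts are total maps from de Bruijn indices to types; extending a context
  by a declaration of the newly bound variable (index 0) shifts the rest.\<close>

definition ext_ctx :: "ty \<Rightarrow> (nat \<Rightarrow> ty) \<Rightarrow> (nat \<Rightarrow> ty)" where
  "ext_ctx A \<Gamma> = (\<lambda>i. case i of 0 \<Rightarrow> A | Suc j \<Rightarrow> \<Gamma> j)"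

inductive typing :: "(nat \<Rightarrow> ty) \<Rightarrow> trm \<Rightarrow> ty \<Rightarrow> (nat \<Rightarrow> ty) \<Rightarrow> bool" where
  ax: "\<Gamma> x = A \<Longrightarrow> typing \<Gamma> (LVar x) A \<Delta>"
| imp_i: "typing (ext_ctx A \<Gamma>) t B \<Delta> \<Longrightarrow> typing \<Gamma> (Lam t) (Imp A B) \<Delta>"
| imp_e: "typing \<Gamma> u (Imp A B) \<Delta> \<Longrightarrow> typing \<Gamma> v A \<Delta> \<Longrightarrow> typing \<Gamma> (App u (ETm v)) B \<Delta>"
| conj_i: "typing \<Gamma> u A \<Delta> \<Longrightarrow> typing \<Gamma> v B \<Delta> \<Longrightarrow> typing \<Gamma> (Pair u v) (Conj A B) \<Delta>"
| conj_e1: "typing \<Gamma> t (Conj A B) \<Delta> \<Longrightarrow> typing \<Gamma> (App t Proj1) A \<Delta>"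
| conj_e2: "typing \<Gamma> t (Conj A B) \<Delta> \<Longrightarrow> typing \<Gamma> (App t Proj2) B \<Delta>"
| disj_i1: "typing \<Gamma> t A \<Delta> \<Longrightarrow> typing \<Gamma> (Inj1 t) (Disj A B) \<Delta>"
| disj_i2: "typing \<Gamma> t B \<Delta> \<Longrightarrow> typing \<Gamma> (Inj2 t) (Disj A B) \<Delta>"
| disj_e: "typing \<Gamma> t (Disj A B) \<Delta> \<Longrightarrow> typing (ext_ctx A \<Gamma>) u C \<Delta> \<Longrightarrow>
           typing (ext_ctx B \<Gamma>) v C \<Delta> \<Longrightarrow> typing \<Gamma> (App t (Case u v)) C \<Delta>"
| abs_i: "typing \<Gamma> t A \<Delta> \<Longrightarrow> \<Delta> a = A \<Longrightarrow> typing \<Gamma> (MApp a t) Bot \<Delta>"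
| abs_e: "typing \<Gamma> t Bot (ext_ctx A \<Delta>) \<Longrightarrow> typing \<Gamma> (Mu t) A \<Delta>"

inductive red :: "trm \<Rightarrow> trm \<Rightarrow> bool"
  and redE :: "elim \<Rightarrow> elim \<Rightarrow> bool" where
  beta: "red (App (Lam u) (ETm v)) (subst u 0 v)"
| proj1: "red (App (Pair t1 t2) Proj1) t1"
| proj2: "red (App (Pair t1 t2) Proj2) t2"
| case1: "red (App (Inj1 t) (Case u1 u2)) (subst u1 0 t)"
| case2: "red (App (Inj2 t) (Case u1 u2)) (subst u2 0 t)"
| comm: "red (App (App t (Case u1 u2)) e)
             (App t (Case (App u1 (lift_lE 0 e)) (App u2 (lift_lE 0 e))))"
| mu: "red (App (Mu t) e) (Mu (msubst t 0 (lift_mE 0 e)))"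
| c_lam: "red t t' \<Longrightarrow> red (Lam t) (Lam t')"
| c_app1: "red t t' \<Longrightarrow> red (App t e) (App t' e)"
| c_app2: "redE e e' \<Longrightarrow> red (App t e) (App t e')"
| c_pair1: "red t t' \<Longrightarrow> red (Pair t u) (Pair t' u)"
| c_pair2: "red u u' \<Longrightarrow> red (Pair t u) (Pair t u')"
| c_inj1: "red t t' \<Longrightarrow> red (Inj1 t) (Inj1 t')"
| c_inj2: "red t t' \<Longrightarrow> red (Inj2 t) (Inj2 t')"
| c_mu: "red t t' \<Longrightarrow> red (Mu t) (Mu t')"
| c_mapp: "red t t' \<Longrightarrow> red (MApp a t) (MApp a t')"
| c_etm: "red t t' \<Longrightarrow> redE (ETm t) (ETm t')"
| c_case1: "red u u' \<Longrightarrow> redE (Case u v) (Case u' v)"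
| c_case2: "red v v' \<Longrightarrow> redE (Case u v) (Case u v')"

end

theory Submission
  imports Defs
begin

text \<open>The proof is by reducibility in the style of Parigot. A type \<open>A\<close> is interpreted by a set
  \<open>stacks A\<close> of sequences of eliminations, and a term is reducible when it is strongly
  normalising in front of every stack of its type. The core of the argument are the lemmas
  showing that a head (a variable, \<open>\<lambda>\<close>, a pair, an injection, \<open>\<mu>\<close>) applied to a stack is
  SN as soon as the relevant contracta are; they are proved by well-founded induction, the
  delicate point being the commuting conversions, which move stack elements into the branches
  of a \<open>Case\<close>. Adequacy, i.e. that a typed term with reducible terms and stacks substituted
  for its free \<open>\<lambda>\<close>- and \<open>\<mu>\<close>-variables is reducible, then follows by induction on the term,
  and the identity substitution yields strong normalisation.\<close>

section \<open>Renaming and substitution\<close>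

lemma lift_l_lift_l:
  fixes t :: trm and e :: elim
  shows "\<And>i j. i \<le> j \<Longrightarrow> lift_l i (lift_l j t) = lift_l (Suc j) (lift_l i t)"
    and "\<And>i j. i \<le> j \<Longrightarrow> lift_lE i (lift_lE j e) = lift_lE (Suc j) (lift_lE i e)"
  by (induct t and e) auto

lemma lift_m_lift_m:
  fixes t :: trm and e :: elim
  shows "\<And>i j. i \<le> j \<Longrightarrow> lift_m i (lift_m j t) = lift_m (Suc j) (lift_m i t)"
    and "\<And>i j. i \<le> j \<Longrightarrow> lift_mE i (lift_mE j e) = lift_mE (Suc j) (lift_mE i e)"
  by (induct t and e) auto

lemma lift_l_lift_m:
  fixes t :: trm and e :: elim
  shows "\<And>i j. lift_l i (lift_m j t) = lift_m j (lift_l i t)"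
    and "\<And>i j. lift_lE i (lift_mE j e) = lift_mE j (lift_lE i e)"
  by (induct t and e) auto

lemma size_lift_m:
  fixes t :: trm and e :: elim
  shows "\<And>k. size (lift_m k t) = size t" and "\<And>k. size (lift_mE k e) = size e"
  by (induct t and e) auto

lemma subst_lift_l:
  fixes t :: trm and e :: elim
  shows "\<And>k s. subst (lift_l k t) k s = t"
    and "\<And>k s. substE (lift_lE k e) k s = e"
  by (induct t and e) auto

lemma lift_l_subst_le:
  fixes t :: trm and e :: elim
  shows "\<And>i j s. j \<le> i \<Longrightarrow> lift_l i (subst t j s) = subst (lift_l (Suc i) t) j (lift_l i s)"
    and "\<And>i j s. j \<le> i \<Longrightarrow> lift_lE i (substE e j s) = substE (lift_lE (Suc i) e) j (lift_l i s)"
  by (induct t and e) (auto simp: lift_l_lift_l lift_l_lift_m)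

lemma lift_l_subst_ge:
  fixes t :: trm and e :: elim
  shows "\<And>i j s. i \<le> j \<Longrightarrow> lift_l i (subst t j s) = subst (lift_l i t) (Suc j) (lift_l i s)"
    and "\<And>i j s. i \<le> j \<Longrightarrow> lift_lE i (substE e j s) = substE (lift_lE i e) (Suc j) (lift_l i s)"
  by (induct t and e) (auto simp: lift_l_lift_l lift_l_lift_m)

lemma lift_m_subst:
  fixes t :: trm and e :: elim
  shows "\<And>k j s. lift_m k (subst t j s) = subst (lift_m k t) j (lift_m k s)"
    and "\<And>k j s. lift_mE k (substE e j s) = substE (lift_mE k e) j (lift_m k s)"
  by (induct t and e) (auto simp: lift_m_lift_m lift_l_lift_m)

lemma subst_subst:
  fixes t :: trm and e :: elim
  shows "\<And>i j u v. i \<le> j \<Longrightarrow>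
      subst (subst t (Suc j) (lift_l i v)) i (subst u j v) = subst (subst t i u) j v"
    and "\<And>i j u v. i \<le> j \<Longrightarrow>
      substE (substE e (Suc j) (lift_l i v)) i (subst u j v) = substE (substE e i u) j v"
  by (induct t and e) (auto simp: lift_l_lift_l lift_l_subst_le lift_l_subst_ge subst_lift_l
      lift_m_subst simp flip: lift_l_lift_m)

primrec mfresh :: "nat \<Rightarrow> trm \<Rightarrow> bool"
  and mfreshE :: "nat \<Rightarrow> elim \<Rightarrow> bool" where
  "mfresh a (LVar i) = True"
| "mfresh a (Lam t) = mfresh a t"
| "mfresh a (App t e) = (mfresh a t \<and> mfreshE a e)"
| "mfresh a (Pair t u) = (mfresh a t \<and> mfresh a u)"
| "mfresh a (Inj1 t) = mfresh a t"
| "mfresh a (Inj2 t) = mfresh a t"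
| "mfresh a (Mu t) = mfresh (Suc a) t"
| "mfresh a (MApp b t) = (b \<noteq> a \<and> mfresh a t)"
| "mfreshE a (ETm t) = mfresh a t"
| "mfreshE a Proj1 = True"
| "mfreshE a Proj2 = True"
| "mfreshE a (Case u v) = (mfresh a u \<and> mfresh a v)"

lemma msubst_mfresh:
  fixes t :: trm and e :: elim
  shows "\<And>a f. mfresh a t \<Longrightarrow> msubst t a f = t"
    and "\<And>a f. mfreshE a e \<Longrightarrow> msubstE e a f = e"
  by (induct t and e) auto

lemma mfresh_lift_m:
  fixes t :: trm and e :: elim
  shows "\<And>k. mfresh k (lift_m k t)"
    and "\<And>k. mfreshE k (lift_mE k e)"
  by (induct t and e) auto

lemma mfresh_lift_m_Suc:
  fixes t :: trm and e :: elim
  shows "\<And>a k. mfresh a t \<Longrightarrow> k \<le> a \<Longrightarrow> mfresh (Suc a) (lift_m k t)"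
    and "\<And>a k. mfreshE a e \<Longrightarrow> k \<le> a \<Longrightarrow> mfreshE (Suc a) (lift_mE k e)"
  by (induct t and e) auto

lemma mfresh_lift_m0:
  "mfresh a t \<Longrightarrow> mfresh (Suc a) (lift_m 0 t)"
  "mfreshE a e \<Longrightarrow> mfreshE (Suc a) (lift_mE 0 e)"
  by (auto simp: mfresh_lift_m_Suc)

lemma mfresh_lift_l:
  fixes t :: trm and e :: elim
  shows "\<And>a k. mfresh a t \<Longrightarrow> mfresh a (lift_l k t)"
    and "\<And>a k. mfreshE a e \<Longrightarrow> mfreshE a (lift_lE k e)"
  by (induct t and e) auto

lemma lift_l_msubst:
  fixes t :: trm and e :: elim
  shows "\<And>k a f. lift_l k (msubst t a f) = msubst (lift_l k t) a (lift_lE k f)"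
    and "\<And>k a f. lift_lE k (msubstE e a f) = msubstE (lift_lE k e) a (lift_lE k f)"
  by (induct t and e) (auto simp: lift_l_lift_l lift_l_lift_m)

lemma lift_m_msubst:
  fixes t :: trm and e :: elim
  shows "\<And>k a f. lift_m k (msubst t a f) =
      msubst (lift_m k t) (if a < k then a else Suc a) (lift_mE k f)"
    and "\<And>k a f. lift_mE k (msubstE e a f) =
      msubstE (lift_mE k e) (if a < k then a else Suc a) (lift_mE k f)"
  by (induct t and e) (auto simp: lift_m_lift_m lift_l_lift_m)

lemma lift_m0_msubst:
  "lift_m 0 (msubst t a f) = msubst (lift_m 0 t) (Suc a) (lift_mE 0 f)"
  "lift_mE 0 (msubstE e a f) = msubstE (lift_mE 0 e) (Suc a) (lift_mE 0 f)"
  using lift_m_msubst[of 0] by auto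

lemma subst_msubst:
  fixes t :: trm and e :: elim
  shows "\<And>a f k w. mfresh a w \<Longrightarrow>
      subst (msubst t a f) k w = msubst (subst t k w) a (substE f k w)"
    and "\<And>a f k w. mfresh a w \<Longrightarrow>
      substE (msubstE e a f) k w = msubstE (substE e k w) a (substE f k w)"
  by (induct t and e)
    (auto simp: msubst_mfresh mfresh_lift_l mfresh_lift_m0 lift_l_subst_ge lift_m_subst)

lemma msubst_subst:
  fixes t :: trm and e :: elim
  shows "\<And>a f k v. msubst (subst t k v) a f = subst (msubst t a (lift_lE k f)) k (msubst v a f)"
    and "\<And>a f k v. msubstE (substE e k v) a f = substE (msubstE e a (lift_lE k f)) k (msubst v a f)"
  by (induct t and e)
    (auto simp: lift_l_msubst lift_m0_msubst lift_l_lift_l lift_l_lift_m subst_lift_l)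

lemma msubst_msubst:
  fixes t :: trm and e :: elim
  shows "\<And>b c F G. b \<noteq> c \<Longrightarrow> mfreshE b G \<Longrightarrow>
      msubst (msubst t b F) c G = msubst (msubst t c G) b (msubstE F c G)"
    and "\<And>b c F G. b \<noteq> c \<Longrightarrow> mfreshE b G \<Longrightarrow>
      msubstE (msubstE e b F) c G = msubstE (msubstE e c G) b (msubstE F c G)"
  by (induct t and e)
    (auto simp: msubst_mfresh mfresh_lift_l mfresh_lift_m0 lift_l_msubst lift_m0_msubst)

abbreviation reds :: "trm \<Rightarrow> trm \<Rightarrow> bool" where "reds \<equiv> red\<^sup>*\<^sup>*"
abbreviation redsE :: "elim \<Rightarrow> elim \<Rightarrow> bool" where "redsE \<equiv> redE\<^sup>*\<^sup>*"

lemma rtranclp_map: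
  "r\<^sup>*\<^sup>* x y \<Longrightarrow> (\<And>x y. r x y \<Longrightarrow> s (f x) (f y)) \<Longrightarrow> s\<^sup>*\<^sup>* (f x) (f y)"
  by (induct rule: rtranclp_induct) (auto intro: rtranclp.rtrancl_into_rtrancl)

lemma red_lift_l:
  shows "red t t' \<Longrightarrow> red (lift_l k t) (lift_l k t')"
    and "redE e e' \<Longrightarrow> redE (lift_lE k e) (lift_lE k e')"
proof (induct arbitrary: k and k rule: red_redE.inducts)
  case (beta u v)
  show ?case using red_redE.beta[of "lift_l (Suc k) u" "lift_l k v"] by (simp add: lift_l_subst_le)
next
  case (case1 t u1 u2)
  show ?case using red_redE.case1[of "lift_l k t" "lift_l (Suc k) u1" "lift_l (Suc k) u2"]
    by (simp add: lift_l_subst_le)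
next
  case (case2 t u1 u2)
  show ?case using red_redE.case2[of "lift_l k t" "lift_l (Suc k) u1" "lift_l (Suc k) u2"]
    by (simp add: lift_l_subst_le)
next
  case (comm t u1 u2 e)
  show ?case
    using red_redE.comm[of "lift_l k t" "lift_l (Suc k) u1" "lift_l (Suc k) u2" "lift_lE k e"]
    by (simp add: lift_l_lift_l)
next
  case (mu t e)
  show ?case using red_redE.mu[of "lift_l k t" "lift_lE k e"]
    by (simp add: lift_l_msubst lift_l_lift_m)
qed (auto intro: red_redE.intros)

lemma red_lift_m:
  shows "red t t' \<Longrightarrow> red (lift_m k t) (lift_m k t')"
    and "redE e e' \<Longrightarrow> redE (lift_mE k e) (lift_mE k e')"
proof (induct arbitrary: k and k rule: red_redE.inducts)
  case (beta u v)
  show ?case using red_redE.beta[of "lift_m k u" "lift_m k v"] by (simp add: lift_m_subst)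
next
  case (case1 t u1 u2)
  show ?case using red_redE.case1[of "lift_m k t" "lift_m k u1" "lift_m k u2"]
    by (simp add: lift_m_subst)
next
  case (case2 t u1 u2)
  show ?case using red_redE.case2[of "lift_m k t" "lift_m k u1" "lift_m k u2"]
    by (simp add: lift_m_subst)
next
  case (comm t u1 u2 e)
  show ?case using red_redE.comm[of "lift_m k t" "lift_m k u1" "lift_m k u2" "lift_mE k e"]
    by (simp add: lift_l_lift_m)
next
  case (mu t e)
  show ?case using red_redE.mu[of "lift_m (Suc k) t" "lift_mE k e"]
    by (simp add: lift_m_msubst lift_m_lift_m)
qed (auto intro: red_redE.intros)

lemma red_subst:
  shows "red t t' \<Longrightarrow> red (subst t k w) (subst t' k w)"
    and "redE e e' \<Longrightarrow> redE (substE e k w) (substE e' k w)"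
proof (induct arbitrary: k w and k w rule: red_redE.inducts)
  case (beta u v)
  show ?case using red_redE.beta[of "subst u (Suc k) (lift_l 0 w)" "subst v k w"]
    by (simp add: subst_subst[symmetric])
next
  case (case1 t u1 u2)
  show ?case using red_redE.case1[of "subst t k w" "subst u1 (Suc k) (lift_l 0 w)"
      "subst u2 (Suc k) (lift_l 0 w)"]
    by (simp add: subst_subst[symmetric])
next
  case (case2 t u1 u2)
  show ?case using red_redE.case2[of "subst t k w" "subst u1 (Suc k) (lift_l 0 w)"
      "subst u2 (Suc k) (lift_l 0 w)"]
    by (simp add: subst_subst[symmetric])
next
  case (comm t u1 u2 e)
  show ?case using red_redE.comm[of "subst t k w" "subst u1 (Suc k) (lift_l 0 w)"
      "subst u2 (Suc k) (lift_l 0 w)" "substE e k w"]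
    by (simp add: lift_l_subst_ge)
next
  case (mu t e)
  show ?case using red_redE.mu[of "subst t k (lift_m 0 w)" "substE e k w"]
    by (simp add: subst_msubst mfresh_lift_m lift_m_subst)
qed (auto intro: red_redE.intros)

lemma red_msubst:
  shows "red t t' \<Longrightarrow> red (msubst t a f) (msubst t' a f)"
    and "redE e e' \<Longrightarrow> redE (msubstE e a f) (msubstE e' a f)"
proof (induct arbitrary: a f and a f rule: red_redE.inducts)
  case (beta u v)
  show ?case using red_redE.beta[of "msubst u a (lift_lE 0 f)" "msubst v a f"]
    by (simp add: msubst_subst)
next
  case (case1 t u1 u2)
  show ?case using red_redE.case1[of "msubst t a f" "msubst u1 a (lift_lE 0 f)"
      "msubst u2 a (lift_lE 0 f)"]
    by (simp add: msubst_subst)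
next
  case (case2 t u1 u2)
  show ?case using red_redE.case2[of "msubst t a f" "msubst u1 a (lift_lE 0 f)"
      "msubst u2 a (lift_lE 0 f)"]
    by (simp add: msubst_subst)
next
  case (comm t u1 u2 e)
  show ?case using red_redE.comm[of "msubst t a f" "msubst u1 a (lift_lE 0 f)"
      "msubst u2 a (lift_lE 0 f)" "msubstE e a f"]
    by (simp add: lift_l_msubst)
next
  case (mu t e)
  show ?case using red_redE.mu[of "msubst t (Suc a) (lift_mE 0 f)" "msubstE e a f"]
    by (simp add: msubst_msubst mfresh_lift_m lift_m0_msubst)
qed (auto intro: red_redE.intros)

lemma reds_Lam: "reds t t' \<Longrightarrow> reds (Lam t) (Lam t')"
  by (rule rtranclp_map[where r = red and s = red and f = Lam]) (auto intro: red_redE.intros)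

lemma reds_App: "reds t t' \<Longrightarrow> redsE e e' \<Longrightarrow> reds (App t e) (App t' e')"
proof -
  assume "reds t t'" "redsE e e'"
  then have "reds (App t e) (App t' e)" "reds (App t' e) (App t' e')"
    by (auto elim!: rtranclp_map intro: red_redE.intros)
  then show ?thesis by simp
qed

lemma reds_Pair: "reds t t' \<Longrightarrow> reds u u' \<Longrightarrow> reds (Pair t u) (Pair t' u')"
proof -
  assume "reds t t'" "reds u u'"
  then have "reds (Pair t u) (Pair t' u)" "reds (Pair t' u) (Pair t' u')"
    by (auto elim!: rtranclp_map intro: red_redE.intros)
  then show ?thesis by simp
qed

lemma reds_Inj1: "reds t t' \<Longrightarrow> reds (Inj1 t) (Inj1 t')"
  by (rule rtranclp_map[where r = red and s = red and f = Inj1]) (auto intro: red_redE.intros)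

lemma reds_Inj2: "reds t t' \<Longrightarrow> reds (Inj2 t) (Inj2 t')"
  by (rule rtranclp_map[where r = red and s = red and f = Inj2]) (auto intro: red_redE.intros)

lemma reds_Mu: "reds t t' \<Longrightarrow> reds (Mu t) (Mu t')"
  by (rule rtranclp_map[where r = red and s = red and f = Mu]) (auto intro: red_redE.intros)

lemma reds_MApp: "reds t t' \<Longrightarrow> reds (MApp a t) (MApp a t')"
  by (rule rtranclp_map[where r = red and s = red and f = "MApp a"]) (auto intro: red_redE.intros)

lemma redsE_ETm: "reds t t' \<Longrightarrow> redsE (ETm t) (ETm t')"
  by (rule rtranclp_map[where r = red and s = redE and f = ETm]) (auto intro: red_redE.intros)

lemma redsE_Case: "reds t t' \<Longrightarrow> reds u u' \<Longrightarrow> redsE (Case t u) (Case t' u')"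
proof -
  assume "reds t t'" "reds u u'"
  then have "redsE (Case t u) (Case t' u)" "redsE (Case t' u) (Case t' u')"
    by (auto elim!: rtranclp_map intro: red_redE.intros)
  then show ?thesis by simp
qed

lemmas reds_congs =
  reds_Lam reds_App reds_Pair reds_Inj1 reds_Inj2 reds_Mu reds_MApp redsE_ETm redsE_Case

lemma reds_subst_arg:
  fixes t :: trm and e :: elim
  shows "\<And>k u u'. red u u' \<Longrightarrow> reds (subst t k u) (subst t k u')"
    and "\<And>k u u'. red u u' \<Longrightarrow> redsE (substE e k u) (substE e k u')"
proof (induct t and e)
  case (Case t1 t2)
  then show ?case
    using Case(1,2)[OF red_lift_l(1)[OF Case(3)]] by (auto intro!: reds_congs)
qed (auto intro!: reds_congs red_lift_l red_lift_m)

lemma reds_msubst_arg: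
  fixes t :: trm and e :: elim
  shows "\<And>a f f'. redE f f' \<Longrightarrow> reds (msubst t a f) (msubst t a f')"
    and "\<And>a f f'. redE f f' \<Longrightarrow> redsE (msubstE e a f) (msubstE e a f')"
proof (induct t and e)
  case (Case t1 t2)
  then show ?case
    using Case(1,2)[OF red_lift_l(2)[OF Case(3)]] by (auto intro!: reds_congs)
next
  case (MApp b t)
  then show ?case by (auto intro!: reds_congs)
qed (auto intro!: reds_congs red_lift_l red_lift_m)

text \<open>After \<open>[a:=* Case u v]\<close> each named subterm \<open>(a w)\<close> has become \<open>(a (w (Case u v)))\<close>,
  so the following \<open>[a:=* f]\<close> creates a commuting redex at each of them.\<close>

lemma msubst_Case_comm:
  fixes t :: trm and e :: elim
  shows "\<And>a u v f. mfreshE a (Case u v) \<Longrightarrow>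
      reds (msubst (msubst t a (Case u v)) a f)
        (msubst t a (Case (App u (lift_lE 0 f)) (App v (lift_lE 0 f))))"
    and "\<And>a u v f. mfreshE a (Case u v) \<Longrightarrow>
      redsE (msubstE (msubstE e a (Case u v)) a f)
        (msubstE e a (Case (App u (lift_lE 0 f)) (App v (lift_lE 0 f))))"
proof (induct t and e)
  case (Lam t)
  show ?case using Lam(1)[of a "lift_l (Suc 0) u" "lift_l (Suc 0) v" "lift_lE 0 f"] Lam(2)
    by (auto intro!: reds_congs simp: lift_l_lift_l mfresh_lift_l)
next
  case (Mu t)
  show ?case using Mu(1)[of "Suc a" "lift_m 0 u" "lift_m 0 v" "lift_mE 0 f"] Mu(2)
    by (auto intro!: reds_congs simp: lift_l_lift_m mfresh_lift_m0)
next
  case (MApp b t)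
  let ?g = "Case (App u (lift_lE 0 f)) (App v (lift_lE 0 f))"
  show ?case
  proof (cases "b = a")
    case True
    have "reds (App (App (msubst (msubst t a (Case u v)) a f) (Case u v)) f)
        (App (App (msubst t a ?g) (Case u v)) f)"
      using MApp by (auto intro!: reds_congs)
    also have "red \<dots> (App (msubst t a ?g) ?g)"
      by (rule red_redE.comm)
    finally show ?thesis using True MApp(2) by (simp add: msubst_mfresh reds_MApp)
  next
    case False
    then show ?thesis using MApp by (auto intro!: reds_congs)
  qed
next
  case (Case t1 t2)
  show ?case using Case(1,2)[of a "lift_l (Suc 0) u" "lift_l (Suc 0) v" "lift_lE 0 f"] Case(3)
    by (auto intro!: reds_congs simp: lift_l_lift_l mfresh_lift_l)
qed (auto intro!: reds_congs)

fun apps :: "trm \<Rightarrow> elim list \<Rightarrow> trm" where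
  "apps t [] = t"
| "apps t (e # es) = apps (App t e) es"

lemma apps_snoc: "apps t (es @ [e]) = App (apps t es) e"
  by (induct es arbitrary: t) auto

lemma lift_m_apps: "lift_m k (apps t es) = apps (lift_m k t) (map (lift_mE k) es)"
  by (induct es arbitrary: t) auto

lemma subst_apps: "subst (apps t es) k w = apps (subst t k w) (map (\<lambda>e. substE e k w) es)"
  by (induct es arbitrary: t) auto

lemma subst_apps_lift_l: "subst (apps u (map (lift_lE 0) es)) 0 w = apps (subst u 0 w) es"
  by (simp add: subst_apps comp_def subst_lift_l)

lemma msubst_apps: "msubst (apps t es) a f = apps (msubst t a f) (map (\<lambda>e. msubstE e a f) es)"
  by (induct es arbitrary: t) auto

declare apps.simps(2) [simp del]

definition not_App :: "trm \<Rightarrow> bool" where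
  "not_App h \<longleftrightarrow> (\<forall>a b. h \<noteq> App a b)"

lemma not_App_simps [simp]:
  "not_App (LVar i)" "not_App (Lam t)" "not_App (Pair t u)" "not_App (Inj1 t)"
  "not_App (Inj2 t)" "not_App (Mu t)" "not_App (MApp a t)"
  by (auto simp: not_App_def)

lemma not_App_apps: "not_App (apps h es) \<Longrightarrow> es = []"
  by (cases es rule: rev_exhaust) (auto simp: apps_snoc not_App_def)

lemma apps_eq_App:
  "not_App h \<Longrightarrow> apps h es = App a b \<Longrightarrow> \<exists>es0. es = es0 @ [b] \<and> a = apps h es0"
  by (cases es rule: rev_exhaust) (auto simp: apps_snoc not_App_def)

text \<open>The reductions of \<open>apps h es\<close> that take place inside the stack \<open>es\<close>; they include the
  commuting conversions, which is why these are missing from the root reductions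
  \<open>root_red\<close> of \<open>App h e\<close>.\<close>

inductive stack_red :: "elim list \<Rightarrow> elim list \<Rightarrow> bool" where
  elem: "redE e e' \<Longrightarrow> stack_red (e # es) (e' # es)"
| tail: "stack_red es es' \<Longrightarrow> stack_red (e # es) (e # es')"
| comm: "stack_red (Case u v # e # es) (Case (App u (lift_lE 0 e)) (App v (lift_lE 0 e)) # es)"

inductive root_red :: "trm \<Rightarrow> trm \<Rightarrow> bool" where
  "root_red (App (Lam u) (ETm v)) (subst u 0 v)"
| "root_red (App (Pair t1 t2) Proj1) t1"
| "root_red (App (Pair t1 t2) Proj2) t2"
| "root_red (App (Inj1 t) (Case u1 u2)) (subst u1 0 t)"
| "root_red (App (Inj2 t) (Case u1 u2)) (subst u2 0 t)"
| "root_red (App (Mu t) e) (Mu (msubst t 0 (lift_mE 0 e)))"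

inductive_cases root_redE: "root_red (App h e) z"

lemma red_apps_head: "red h h' \<Longrightarrow> red (apps h es) (apps h' es)"
  by (induct es arbitrary: h h') (auto simp: apps.simps(2) intro: red_redE.c_app1)

lemma reds_apps_head: "reds h h' \<Longrightarrow> reds (apps h es) (apps h' es)"
  by (rule rtranclp_map[where r = red and s = red]) (auto intro: red_apps_head)

lemma stack_red_apps: "stack_red es es' \<Longrightarrow> red (apps h es) (apps h es')"
  by (induct arbitrary: h rule: stack_red.induct)
    (auto simp: apps.simps(2) intro!: red_apps_head intro: red_redE.intros)

lemma stack_red_snoc: "stack_red es es' \<Longrightarrow> stack_red (es @ [e]) (es' @ [e])"
  by (induct rule: stack_red.induct) (auto intro: stack_red.intros)

lemma stack_red_append: "stack_red es es' \<Longrightarrow> stack_red (pre @ es) (pre @ es')"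
  by (induct pre) (auto intro: stack_red.intros)

lemma stack_red_last: "redE e e' \<Longrightarrow> stack_red (es @ [e]) (es @ [e'])"
  by (induct es) (auto intro: stack_red.intros)

lemma stack_red_length: "stack_red es es' \<Longrightarrow> length es' \<le> length es"
  by (induct rule: stack_red.induct) auto

lemma stack_red_map_lift_l:
  "stack_red es es' \<Longrightarrow> stack_red (map (lift_lE k) es) (map (lift_lE k) es')"
proof (induct arbitrary: k rule: stack_red.induct)
  case (comm u v e es)
  show ?case using stack_red.comm[of "lift_l (Suc k) u" "lift_l (Suc k) v" "lift_lE k e"]
    by (simp add: lift_l_lift_l)
qed (auto intro: stack_red.intros red_lift_l)

lemma red_apps_cases:
  assumes "not_App h" "red (apps h es) y"
  shows "(\<exists>h'. red h h' \<and> y = apps h' es) \<or> (\<exists>es'. stack_red es es' \<and> y = apps h es')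
    \<or> (\<exists>e es0 z. es = e # es0 \<and> root_red (App h e) z \<and> y = apps z es0)"
  using assms(2)
proof (induct es arbitrary: y rule: rev_induct)
  case (snoc e es)
  from snoc(2) have "red (App (apps h es) e) y" by (simp add: apps_snoc)
  then show ?case
  proof (cases rule: red.cases)
    case (comm t u1 u2)
    then obtain es0 where "es = es0 @ [Case u1 u2]" "t = apps h es0"
      using assms(1) apps_eq_App by blast
    moreover have "stack_red (es0 @ [Case u1 u2, e])
        (es0 @ [Case (App u1 (lift_lE 0 e)) (App u2 (lift_lE 0 e))])"
      by (intro stack_red_append stack_red.comm)
    ultimately show ?thesis using comm by (auto simp: apps_snoc)
  next
    case (c_app1 t')
    from snoc(1)[OF this(2)] show ?thesis
      using c_app1 by (auto simp: apps_snoc apps.simps(2) intro: stack_red_snoc)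
  next
    case (c_app2 e')
    then show ?thesis by (auto simp: apps_snoc intro: stack_red_last)
  qed (use not_App_apps[of h es] in \<open>auto simp: apps.simps(2) intro: root_red.intros\<close>)
qed simp

lemma red_appsE:
  assumes "not_App h" "red (apps h es) y"
  obtains (head) h' where "red h h'" "y = apps h' es"
  | (stack) es' where "stack_red es es'" "y = apps h es'"
  | (root) e es0 z where "es = e # es0" "root_red (App h e) z" "y = apps z es0"
  using red_apps_cases[OF assms] by blast

lemma red_apps_ConsE:
  assumes "not_App h" "red (apps h (e # es)) y"
  obtains (head) h' where "red h h'" "y = apps h' (e # es)"
  | (elim) e' where "redE e e'" "y = apps h (e' # es)"
  | (tail) es' where "stack_red es es'" "y = apps h (e # es')"
  | (comm) u v e2 es2 where "e = Case u v" "es = e2 # es2"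
      "y = apps h (Case (App u (lift_lE 0 e2)) (App v (lift_lE 0 e2)) # es2)"
  | (root) z where "root_red (App h e) z" "y = apps z es"
  using assms
proof (cases rule: red_appsE)
  case (stack es')
  then show thesis using that by (cases rule: stack_red.cases) blast+
qed blast+

inductive SN :: "trm \<Rightarrow> bool" where
  SNI: "(\<And>y. red x y \<Longrightarrow> SN y) \<Longrightarrow> SN x"

lemma SN_red: "SN x \<Longrightarrow> red x y \<Longrightarrow> SN y"
  by (erule SN.cases) blast

lemma SN_reds: "reds x y \<Longrightarrow> SN x \<Longrightarrow> SN y"
  by (induct rule: rtranclp_induct) (auto intro: SN_red)

lemma SN_no_infinite_red:
  "SN t \<Longrightarrow> \<not> (\<exists>f :: nat \<Rightarrow> trm. f 0 = t \<and> (\<forall>i. red (f i) (f (Suc i))))"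
proof (induct rule: SN.induct)
  case (SNI x)
  show ?case
  proof
    assume "\<exists>f. f 0 = x \<and> (\<forall>i. red (f i) (f (Suc i)))"
    then obtain f where f: "f 0 = x" "\<forall>i. red (f i) (f (Suc i))" by blast
    then have "red x (f 1)" by (metis One_nat_def)
    moreover have "\<exists>g. g 0 = f 1 \<and> (\<forall>i. red (g i) (g (Suc i)))"
      using f by (intro exI[of _ "\<lambda>i. f (Suc i)"]) simp
    ultimately show False using SNI(2) by blast
  qed
qed

definition red_on_SN :: "(trm \<times> trm) set" where
  "red_on_SN = {(y, x). SN x \<and> red x y}"

lemma red_on_SN_iff [simp]: "(y, x) \<in> red_on_SN \<longleftrightarrow> SN x \<and> red x y"
  by (simp add: red_on_SN_def)

lemma wf_red_on_SN: "wf red_on_SN"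
proof (rule acc_wfI, rule allI)
  fix x
  show "x \<in> Wellfounded.acc red_on_SN"
  proof (cases "SN x")
    case True
    then show ?thesis
      by (induct rule: SN.induct) (auto intro: accI)
  next
    case False
    then show ?thesis by (auto intro: accI)
  qed
qed

lemma SN_by_wf:
  assumes "wf R"
    and step: "\<And>x y. I x \<Longrightarrow> red (F x) y \<Longrightarrow> SN y \<or> (\<exists>x'. I x' \<and> (x', x) \<in> R \<and> y = F x')"
    and "I x"
  shows "SN (F x)"
  using assms(1,3)
proof (induct x rule: wf_induct_rule)
  case (less x)
  show ?case
  proof (rule SNI)
    fix y assume "red (F x) y"
    from step[OF less(2) this] show "SN y" using less(1) by blast
  qed
qed

lemma SN_reflect:
  assumes f: "\<And>x y. red x y \<Longrightarrow> red (f x) (f y)" and "SN (f x)"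
  shows "SN x"
proof -
  have "SN z \<Longrightarrow> f x = z \<Longrightarrow> SN x" for z
  proof (induct arbitrary: x rule: SN.induct)
    case (SNI z)
    show ?case
      by (rule SN.SNI) (use SNI f in blast)
  qed
  then show ?thesis using assms(2) by blast
qed

lemma SN_subst: "SN (subst t k w) \<Longrightarrow> SN t"
  by (rule SN_reflect[where f = "\<lambda>x. subst x k w"]) (auto intro: red_subst)

inductive_cases red_LVarE: "red (LVar i) y"
inductive_cases red_LamE: "red (Lam t) y"
inductive_cases red_Inj1E: "red (Inj1 t) y"
inductive_cases red_Inj2E: "red (Inj2 t) y"
inductive_cases red_MuE: "red (Mu t) y"
inductive_cases red_MAppE: "red (MApp a t) y"
inductive_cases redE_ETmE: "redE (ETm t) y"
inductive_cases redE_Proj1E: "redE Proj1 y"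
inductive_cases redE_Proj2E: "redE Proj2 y"

lemma red_PairE:
  assumes "red (Pair t u) y"
  obtains (left) t' where "red t t'" "y = Pair t' u"
  | (right) u' where "red u u'" "y = Pair t u'"
  using assms by (cases rule: red.cases) auto

lemma redE_CaseE:
  assumes "redE (Case u v) e'"
  obtains (left) u' where "red u u'" "e' = Case u' v"
  | (right) v' where "red v v'" "e' = Case u v'"
  using assms by (cases rule: redE.cases) auto

lemma SN_LVar: "SN (LVar x)"
  by (rule SNI) (auto elim: red_LVarE)

lemma SN_Lam: "SN t \<Longrightarrow> SN (Lam t)"
  by (rule SN_by_wf[where R = red_on_SN and I = SN and F = Lam, OF wf_red_on_SN])
    (auto elim: red_LamE intro: SN_red)

lemma SN_Inj1: "SN t \<Longrightarrow> SN (Inj1 t)"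
  by (rule SN_by_wf[where R = red_on_SN and I = SN and F = Inj1, OF wf_red_on_SN])
    (auto elim: red_Inj1E intro: SN_red)

lemma SN_Inj2: "SN t \<Longrightarrow> SN (Inj2 t)"
  by (rule SN_by_wf[where R = red_on_SN and I = SN and F = Inj2, OF wf_red_on_SN])
    (auto elim: red_Inj2E intro: SN_red)

lemma SN_MApp: "SN t \<Longrightarrow> SN (MApp a t)"
  by (rule SN_by_wf[where R = red_on_SN and I = SN and F = "MApp a", OF wf_red_on_SN])
    (auto elim: red_MAppE intro: SN_red)

lemma SN_Pair:
  assumes "SN t" "SN u"
  shows "SN (Pair t u)"
proof -
  have "SN ((\<lambda>(a, b). Pair a b) (t, u))"
    by (rule SN_by_wf[where R = "red_on_SN <*lex*> red_on_SN" and I = "\<lambda>(a, b). SN a \<and> SN b"])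
      (auto intro: wf_red_on_SN SN_red elim!: red_PairE simp: assms)
  then show ?thesis by simp
qed

section \<open>Strong normalisation of a head applied to a stack\<close>

inductive_cases red_AppE: "red (App t e) y"

lemma SN_App_LVar_ETm: "SN u \<Longrightarrow> SN (App (LVar x) (ETm u))"
  by (rule SN_by_wf[where R = red_on_SN and I = SN and F = "\<lambda>u. App (LVar x) (ETm u)",
        OF wf_red_on_SN])
    (auto elim!: red_AppE redE_ETmE red_LVarE intro: SN_red)

lemma SN_App_LVar_Proj: "SN (App (LVar x) Proj1)" "SN (App (LVar x) Proj2)"
  by (rule SNI, erule red_AppE; auto elim: red_LVarE redE_Proj1E redE_Proj2E)+

lemma SN_apps_LVar:
  assumes "SN (apps h es)"
  shows "SN (apps (LVar x) es)"
proof (rule SN_by_wf[where R = "inv_image red_on_SN (apps h)" and I = "\<lambda>es. SN (apps h es)"])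
  show "wf (inv_image red_on_SN (apps h))" by (intro wf_inv_image wf_red_on_SN)
next
  fix es y assume I: "SN (apps h es)" and r: "red (apps (LVar x) es) y"
  from not_App_simps(1) r show "SN y \<or> (\<exists>es'. SN (apps h es')
      \<and> (es', es) \<in> inv_image red_on_SN (apps h) \<and> y = apps (LVar x) es')"
    by (cases rule: red_appsE)
      (use I in \<open>auto elim: red_LVarE root_redE intro: stack_red_apps SN_red\<close>)
qed (rule assms)

lemma SN_apps_LVar_Cons:
  assumes "\<forall>u v. e \<noteq> Case u v" "SN (App (LVar 0) e)" "SN (apps (LVar x) es)"
  shows "SN (apps (LVar x) (e # es))"
proof -
  let ?F = "\<lambda>(e, es). apps (LVar x) (e # es)"
  let ?I = "\<lambda>(e, es). (\<forall>u v. e \<noteq> Case u v) \<and> SN (App (LVar 0) e) \<and> SN (apps (LVar x) es)"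
  let ?R = "inv_image (red_on_SN <*lex*> red_on_SN) (\<lambda>(e, es). (App (LVar 0) e, apps (LVar x) es))"
  have "SN (?F (e, es))"
  proof (rule SN_by_wf[where I = ?I and R = ?R])
    show "wf ?R" by (intro wf_inv_image wf_lex_prod wf_red_on_SN)
  next
    fix p y assume "?I p" "red (?F p) y"
    then obtain e es where p: "p = (e, es)" and I: "\<forall>u v. e \<noteq> Case u v"
      "SN (App (LVar 0) e)" "SN (apps (LVar x) es)" and r: "red (apps (LVar x) (e # es)) y"
      by (cases p) auto
    from not_App_simps(1) r show "SN y \<or> (\<exists>p'. ?I p' \<and> (p', p) \<in> ?R \<and> y = ?F p')"
    proof (cases rule: red_apps_ConsE)
      case (elim e')
      moreover have "\<forall>u v. e' \<noteq> Case u v" using I(1) elim(1) by (auto elim: redE.cases)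
      ultimately show ?thesis using I p
        by (intro disjI2 exI[of _ "(e', es)"]) (auto intro: SN_red red_redE.intros)
    next
      case (tail es')
      then show ?thesis using I p
        by (intro disjI2 exI[of _ "(e, es')"]) (auto intro: SN_red stack_red_apps)
    qed (use I in \<open>auto elim: red_LVarE root_redE\<close>)
  qed (use assms in auto)
  then show ?thesis by simp
qed

lemma SN_apps_LVar_Case:
  assumes "SN (apps u (map (lift_lE 0) es))" "SN (apps v (map (lift_lE 0) es))"
  shows "SN (apps (LVar x) (Case u v # es))"
proof -
  let ?F = "\<lambda>(u, v, es). apps (LVar x) (Case u v # es)"
  let ?I = "\<lambda>(u, v, es). SN (apps u (map (lift_lE 0) es)) \<and> SN (apps v (map (lift_lE 0) es))"
  let ?R = "inv_image (red_on_SN <*lex*> red_on_SN <*lex*> less_than)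
     (\<lambda>(u, v, es). (apps u (map (lift_lE 0) es), apps v (map (lift_lE 0) es), length es))"
  have "SN (?F (u, v, es))"
  proof (rule SN_by_wf[where I = ?I and R = ?R])
    show "wf ?R" by (intro wf_inv_image wf_lex_prod wf_red_on_SN wf_less_than)
  next
    fix p y assume "?I p" "red (?F p) y"
    then obtain u v es where p: "p = (u, v, es)" and I: "SN (apps u (map (lift_lE 0) es))"
      "SN (apps v (map (lift_lE 0) es))" and r: "red (apps (LVar x) (Case u v # es)) y"
      by (cases p) auto
    from not_App_simps(1) r show "SN y \<or> (\<exists>p'. ?I p' \<and> (p', p) \<in> ?R \<and> y = ?F p')"
    proof (cases rule: red_apps_ConsE)
      case (elim e')
      from elim(1) show ?thesis
      proof (cases rule: redE_CaseE)
        case (left u')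
        then show ?thesis using elim I p
          by (intro disjI2 exI[of _ "(u', v, es)"]) (auto intro: SN_red red_apps_head)
      next
        case (right v')
        then show ?thesis using elim I p
          by (intro disjI2 exI[of _ "(u, v', es)"]) (auto intro: SN_red red_apps_head)
      qed
    next
      case (tail es')
      then show ?thesis using I p
        by (intro disjI2 exI[of _ "(u, v, es')"])
          (auto intro: SN_red stack_red_apps stack_red_map_lift_l)
    next
      case (comm u0 v0 e2 es2)
      then show ?thesis using I p
        by (intro disjI2 exI[of _ "(App u (lift_lE 0 e2), App v (lift_lE 0 e2), es2)"])
          (auto simp: apps.simps(2))
    qed (auto elim: red_LVarE root_redE)
  qed (use assms in auto)
  then show ?thesis by simp
qed

lemma SN_apps_Lam:
  assumes "SN u" "SN (apps (subst X 0 u) es)"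
  shows "SN (apps (Lam X) (ETm u # es))"
proof -
  let ?F = "\<lambda>(X, u, es). apps (Lam X) (ETm u # es)"
  let ?I = "\<lambda>(X, u, es). SN u \<and> SN (apps (subst X 0 u) es)"
  let ?R = "inv_image (red_on_SN <*lex*> red_on_SN) (\<lambda>(X, u, es). (u, apps (subst X 0 u) es))"
  have "SN (?F (X, u, es))"
  proof (rule SN_by_wf[where I = ?I and R = ?R])
    show "wf ?R" by (intro wf_inv_image wf_lex_prod wf_red_on_SN)
  next
    fix p y assume "?I p" "red (?F p) y"
    then obtain X u es where p: "p = (X, u, es)" and I: "SN u" "SN (apps (subst X 0 u) es)"
      and r: "red (apps (Lam X) (ETm u # es)) y"
      by (cases p) auto
    from not_App_simps(2) r show "SN y \<or> (\<exists>p'. ?I p' \<and> (p', p) \<in> ?R \<and> y = ?F p')"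
    proof (cases rule: red_apps_ConsE)
      case (head h')
      then obtain X' where "h' = Lam X'" "red X X'" by (auto elim: red_LamE)
      then show ?thesis using head I p
        by (intro disjI2 exI[of _ "(X', u, es)"]) (auto intro: SN_red red_apps_head red_subst)
    next
      case (elim e')
      then obtain u' where "e' = ETm u'" "red u u'" by (auto elim: redE_ETmE)
      moreover have "reds (apps (subst X 0 u) es) (apps (subst X 0 u') es)"
        using calculation by (auto intro: reds_apps_head reds_subst_arg)
      ultimately show ?thesis using elim I p
        by (intro disjI2 exI[of _ "(X, u', es)"]) (auto intro: SN_red SN_reds)
    next
      case (tail es')
      then show ?thesis using I p
        by (intro disjI2 exI[of _ "(X, u, es')"]) (auto intro: SN_red stack_red_apps)
    qed (use I in \<open>auto elim: root_redE\<close>)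
  qed (use assms in auto)
  then show ?thesis by simp
qed

lemma SN_apps_Pair_Proj1:
  assumes "SN (apps t1 es)" "SN t2"
  shows "SN (apps (Pair t1 t2) (Proj1 # es))"
proof -
  let ?F = "\<lambda>(t1, t2, es). apps (Pair t1 t2) (Proj1 # es)"
  let ?I = "\<lambda>(t1, t2, es). SN (apps t1 es) \<and> SN t2"
  let ?R = "inv_image (red_on_SN <*lex*> red_on_SN) (\<lambda>(t1, t2, es). (apps t1 es, t2))"
  have "SN (?F (t1, t2, es))"
  proof (rule SN_by_wf[where I = ?I and R = ?R])
    show "wf ?R" by (intro wf_inv_image wf_lex_prod wf_red_on_SN)
  next
    fix p y assume "?I p" "red (?F p) y"
    then obtain t1 t2 es where p: "p = (t1, t2, es)" and I: "SN (apps t1 es)" "SN t2"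
      and r: "red (apps (Pair t1 t2) (Proj1 # es)) y"
      by (cases p) auto
    from not_App_simps(3) r show "SN y \<or> (\<exists>p'. ?I p' \<and> (p', p) \<in> ?R \<and> y = ?F p')"
    proof (cases rule: red_apps_ConsE)
      case (head h')
      then show ?thesis
      proof (cases rule: red_PairE)
        case (left t1')
        then show ?thesis using head I p
          by (intro disjI2 exI[of _ "(t1', t2, es)"]) (auto intro: SN_red red_apps_head)
      next
        case (right t2')
        then show ?thesis using head I p
          by (intro disjI2 exI[of _ "(t1, t2', es)"]) (auto intro: SN_red)
      qed
    next
      case (tail es')
      then show ?thesis using I p
        by (intro disjI2 exI[of _ "(t1, t2, es')"]) (auto intro: SN_red stack_red_apps)
    qed (use I in \<open>auto elim: redE_Proj1E root_redE\<close>)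
  qed (use assms in auto)
  then show ?thesis by simp
qed

lemma SN_apps_Pair_Proj2:
  assumes "SN t1" "SN (apps t2 es)"
  shows "SN (apps (Pair t1 t2) (Proj2 # es))"
proof -
  let ?F = "\<lambda>(t1, t2, es). apps (Pair t1 t2) (Proj2 # es)"
  let ?I = "\<lambda>(t1, t2, es). SN (apps t2 es) \<and> SN t1"
  let ?R = "inv_image (red_on_SN <*lex*> red_on_SN) (\<lambda>(t1, t2, es). (apps t2 es, t1))"
  have "SN (?F (t1, t2, es))"
  proof (rule SN_by_wf[where I = ?I and R = ?R])
    show "wf ?R" by (intro wf_inv_image wf_lex_prod wf_red_on_SN)
  next
    fix p y assume "?I p" "red (?F p) y"
    then obtain t1 t2 es where p: "p = (t1, t2, es)" and I: "SN (apps t2 es)" "SN t1"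
      and r: "red (apps (Pair t1 t2) (Proj2 # es)) y"
      by (cases p) auto
    from not_App_simps(3) r show "SN y \<or> (\<exists>p'. ?I p' \<and> (p', p) \<in> ?R \<and> y = ?F p')"
    proof (cases rule: red_apps_ConsE)
      case (head h')
      then show ?thesis
      proof (cases rule: red_PairE)
        case (left t1')
        then show ?thesis using head I p
          by (intro disjI2 exI[of _ "(t1', t2, es)"]) (auto intro: SN_red)
      next
        case (right t2')
        then show ?thesis using head I p
          by (intro disjI2 exI[of _ "(t1, t2', es)"]) (auto intro: SN_red red_apps_head)
      qed
    next
      case (tail es')
      then show ?thesis using I p
        by (intro disjI2 exI[of _ "(t1, t2, es')"]) (auto intro: SN_red stack_red_apps)
    qed (use I in \<open>auto elim: redE_Proj2E root_redE\<close>)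
  qed (use assms in auto)
  then show ?thesis by simp
qed

text \<open>Besides the selected branch, the other branch of the \<open>Case\<close> has to be SN together
  with the remaining stack, because commuting conversions push the stack into both branches
  before the redex is contracted.\<close>

lemma SN_apps_Inj1_Case:
  assumes "SN w" "SN (apps (subst u 0 w) es)" "SN (apps v (map (lift_lE 0) es))"
  shows "SN (apps (Inj1 w) (Case u v # es))"
proof -
  let ?F = "\<lambda>(w, u, v, es). apps (Inj1 w) (Case u v # es)"
  let ?I = "\<lambda>(w, u, v, es). SN w \<and> SN (apps (subst u 0 w) es) \<and> SN (apps v (map (lift_lE 0) es))"
  let ?R = "inv_image (red_on_SN <*lex*> red_on_SN <*lex*> red_on_SN <*lex*> less_than)
     (\<lambda>(w, u, v, es). (w, apps (subst u 0 w) es, apps v (map (lift_lE 0) es), length es))"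
  have "SN (?F (w, u, v, es))"
  proof (rule SN_by_wf[where I = ?I and R = ?R])
    show "wf ?R" by (intro wf_inv_image wf_lex_prod wf_red_on_SN wf_less_than)
  next
    fix p y assume "?I p" "red (?F p) y"
    then obtain w u v es where p: "p = (w, u, v, es)" and I: "SN w"
      "SN (apps (subst u 0 w) es)" "SN (apps v (map (lift_lE 0) es))"
      and r: "red (apps (Inj1 w) (Case u v # es)) y"
      by (cases p) auto
    from not_App_simps(4) r show "SN y \<or> (\<exists>p'. ?I p' \<and> (p', p) \<in> ?R \<and> y = ?F p')"
    proof (cases rule: red_apps_ConsE)
      case (head h')
      then obtain w' where w': "h' = Inj1 w'" "red w w'" by (auto elim: red_Inj1E)
      then have "reds (apps (subst u 0 w) es) (apps (subst u 0 w') es)"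
        by (auto intro: reds_apps_head reds_subst_arg)
      then show ?thesis using head w' I p
        by (intro disjI2 exI[of _ "(w', u, v, es)"]) (auto intro: SN_red SN_reds)
    next
      case (elim e')
      from elim(1) show ?thesis
      proof (cases rule: redE_CaseE)
        case (left u')
        then show ?thesis using elim I p
          by (intro disjI2 exI[of _ "(w, u', v, es)"]) (auto intro: SN_red red_apps_head red_subst)
      next
        case (right v')
        then show ?thesis using elim I p
          by (intro disjI2 exI[of _ "(w, u, v', es)"]) (auto intro: SN_red red_apps_head)
      qed
    next
      case (tail es')
      then show ?thesis using I p
        by (intro disjI2 exI[of _ "(w, u, v, es')"])
          (auto intro: SN_red stack_red_apps stack_red_map_lift_l)
    next
      case (comm u0 v0 e2 es2)
      then show ?thesis using I p
        by (intro disjI2 exI[of _ "(w, App u (lift_lE 0 e2), App v (lift_lE 0 e2), es2)"])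
          (auto simp: apps.simps(2) subst_lift_l)
    qed (use I in \<open>auto elim: root_redE\<close>)
  qed (use assms in auto)
  then show ?thesis by simp
qed

lemma SN_apps_Inj2_Case:
  assumes "SN w" "SN (apps (subst v 0 w) es)" "SN (apps u (map (lift_lE 0) es))"
  shows "SN (apps (Inj2 w) (Case u v # es))"
proof -
  let ?F = "\<lambda>(w, u, v, es). apps (Inj2 w) (Case u v # es)"
  let ?I = "\<lambda>(w, u, v, es). SN w \<and> SN (apps (subst v 0 w) es) \<and> SN (apps u (map (lift_lE 0) es))"
  let ?R = "inv_image (red_on_SN <*lex*> red_on_SN <*lex*> red_on_SN <*lex*> less_than)
     (\<lambda>(w, u, v, es). (w, apps (subst v 0 w) es, apps u (map (lift_lE 0) es), length es))"
  have "SN (?F (w, u, v, es))"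
  proof (rule SN_by_wf[where I = ?I and R = ?R])
    show "wf ?R" by (intro wf_inv_image wf_lex_prod wf_red_on_SN wf_less_than)
  next
    fix p y assume "?I p" "red (?F p) y"
    then obtain w u v es where p: "p = (w, u, v, es)" and I: "SN w"
      "SN (apps (subst v 0 w) es)" "SN (apps u (map (lift_lE 0) es))"
      and r: "red (apps (Inj2 w) (Case u v # es)) y"
      by (cases p) auto
    from not_App_simps(5) r show "SN y \<or> (\<exists>p'. ?I p' \<and> (p', p) \<in> ?R \<and> y = ?F p')"
    proof (cases rule: red_apps_ConsE)
      case (head h')
      then obtain w' where w': "h' = Inj2 w'" "red w w'" by (auto elim: red_Inj2E)
      then have "reds (apps (subst v 0 w) es) (apps (subst v 0 w') es)"
        by (auto intro: reds_apps_head reds_subst_arg)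
      then show ?thesis using head w' I p
        by (intro disjI2 exI[of _ "(w', u, v, es)"]) (auto intro: SN_red SN_reds)
    next
      case (elim e')
      from elim(1) show ?thesis
      proof (cases rule: redE_CaseE)
        case (left u')
        then show ?thesis using elim I p
          by (intro disjI2 exI[of _ "(w, u', v, es)"]) (auto intro: SN_red red_apps_head)
      next
        case (right v')
        then show ?thesis using elim I p
          by (intro disjI2 exI[of _ "(w, u, v', es)"]) (auto intro: SN_red red_apps_head red_subst)
      qed
    next
      case (tail es')
      then show ?thesis using I p
        by (intro disjI2 exI[of _ "(w, u, v, es')"])
          (auto intro: SN_red stack_red_apps stack_red_map_lift_l)
    next
      case (comm u0 v0 e2 es2)
      then show ?thesis using I p
        by (intro disjI2 exI[of _ "(w, App u (lift_lE 0 e2), App v (lift_lE 0 e2), es2)"])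
          (auto simp: apps.simps(2) subst_lift_l)
    qed (use I in \<open>auto elim: root_redE\<close>)
  qed (use assms in auto)
  then show ?thesis by simp
qed

text \<open>\<open>msubsts X [e\<^sub>1, \<dots>, e\<^sub>n]\<close> is the body of \<open>\<mu>\<close> after \<open>(\<dots>(Mu X e\<^sub>1)\<dots> e\<^sub>n)\<close> has been
  reduced by \<open>n\<close> \<open>\<mu>\<close>-steps.\<close>

definition msubsts :: "trm \<Rightarrow> elim list \<Rightarrow> trm" where
  "msubsts X es = foldl (\<lambda>Y e. msubst Y 0 (lift_mE 0 e)) X es"

lemma msubsts_Nil [simp]: "msubsts X [] = X"
  by (simp add: msubsts_def)

lemma msubsts_Cons: "msubsts X (e # es) = msubsts (msubst X 0 (lift_mE 0 e)) es"
  by (simp add: msubsts_def)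

lemma red_msubsts: "red X X' \<Longrightarrow> red (msubsts X es) (msubsts X' es)"
  by (induct es arbitrary: X X') (auto simp: msubsts_Cons red_msubst)

lemma reds_msubsts: "reds X X' \<Longrightarrow> reds (msubsts X es) (msubsts X' es)"
  by (rule rtranclp_map[where r = red and s = red]) (auto intro: red_msubsts)

lemma stack_red_msubsts: "stack_red es es' \<Longrightarrow> reds (msubsts X es) (msubsts X es')"
proof (induct arbitrary: X rule: stack_red.induct)
  case (elem e e' es)
  have "redE (lift_mE 0 e) (lift_mE 0 e')" using elem by (rule red_lift_m)
  then have "reds (msubst X 0 (lift_mE 0 e)) (msubst X 0 (lift_mE 0 e'))"
    by (rule reds_msubst_arg)
  then show ?case by (simp add: msubsts_Cons reds_msubsts)
next
  case (tail es es' e)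
  then show ?case by (simp add: msubsts_Cons)
next
  case (comm u v e es)
  have "reds (msubst (msubst X 0 (Case (lift_m 0 u) (lift_m 0 v))) 0 (lift_mE 0 e))
      (msubst X 0 (Case (App (lift_m 0 u) (lift_lE 0 (lift_mE 0 e)))
        (App (lift_m 0 v) (lift_lE 0 (lift_mE 0 e)))))"
    by (rule msubst_Case_comm) (simp add: mfresh_lift_m)
  then show ?case by (simp add: msubsts_Cons reds_msubsts lift_l_lift_m)
qed

text \<open>A \<open>\<mu>\<close>-step shortens the stack, \<open>apps (LVar 0) es\<close> bounds the reductions inside the
  stack and \<open>msubsts X es\<close> those of the body.\<close>

lemma SN_apps_Mu:
  assumes "SN (apps (LVar 0) es)" "SN (msubsts X es)"
  shows "SN (apps (Mu X) es)"
proof -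
  let ?F = "\<lambda>(X, es). apps (Mu X) es"
  let ?I = "\<lambda>(X, es). SN (apps (LVar 0) es) \<and> SN (msubsts X es)"
  let ?R = "inv_image (less_than <*lex*> red_on_SN <*lex*> red_on_SN)
    (\<lambda>(X, es). (length es, apps (LVar 0) es, msubsts X es))"
  have "SN (?F (X, es))"
  proof (rule SN_by_wf[where I = ?I and R = ?R])
    show "wf ?R" by (intro wf_inv_image wf_lex_prod wf_red_on_SN wf_less_than)
  next
    fix p y assume "?I p" "red (?F p) y"
    then obtain X es where p: "p = (X, es)" and I: "SN (apps (LVar 0) es)" "SN (msubsts X es)"
      and r: "red (apps (Mu X) es) y"
      by (cases p) auto
    from not_App_simps(6) r show "SN y \<or> (\<exists>p'. ?I p' \<and> (p', p) \<in> ?R \<and> y = ?F p')"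
    proof (cases rule: red_appsE)
      case (head h')
      then obtain X' where "h' = Mu X'" "red X X'" by (auto elim: red_MuE)
      then show ?thesis using head I p
        by (intro disjI2 exI[of _ "(X', es)"]) (auto intro: SN_red red_msubsts)
    next
      case (stack es')
      then show ?thesis using I p
        by (intro disjI2 exI[of _ "(X, es')"])
          (auto intro: SN_red SN_reds stack_red_apps stack_red_msubsts dest: stack_red_length)
    next
      case (root e es0 z)
      then have "SN (apps (LVar 0) es0)"
        using I by (auto simp: apps.simps(2) intro: SN_apps_LVar)
      then show ?thesis using root I p
        by (intro disjI2 exI[of _ "(msubst X 0 (lift_mE 0 e), es0)"])
          (auto elim!: root_redE simp: msubsts_Cons)
    qed
  qed (use assms in auto)
  then show ?thesis by simp
qed

text \<open>\<open>psubst \<sigma> \<rho> t\<close> replaces each free \<open>\<lambda>\<close>-variable \<open>i\<close> by \<open>\<sigma> i\<close> and each named subterm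
  \<open>(a w)\<close> by \<open>(a (w e\<^sub>1 \<dots> e\<^sub>n))\<close> where \<open>\<rho> a = [e\<^sub>1, \<dots>, e\<^sub>n]\<close>: a parallel version of
  \<open>subst\<close> and iterated \<open>msubst\<close>.\<close>

definition up_l :: "(nat \<Rightarrow> trm) \<Rightarrow> nat \<Rightarrow> trm" where
  "up_l \<sigma> = (\<lambda>i. case i of 0 \<Rightarrow> LVar 0 | Suc j \<Rightarrow> lift_l 0 (\<sigma> j))"

definition lift_stacks_l :: "(nat \<Rightarrow> elim list) \<Rightarrow> nat \<Rightarrow> elim list" where
  "lift_stacks_l \<rho> = (\<lambda>a. map (lift_lE 0) (\<rho> a))"

definition up_m :: "(nat \<Rightarrow> elim list) \<Rightarrow> nat \<Rightarrow> elim list" where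
  "up_m \<rho> = (\<lambda>a. case a of 0 \<Rightarrow> [] | Suc b \<Rightarrow> map (lift_mE 0) (\<rho> b))"

definition scons :: "trm \<Rightarrow> (nat \<Rightarrow> trm) \<Rightarrow> nat \<Rightarrow> trm" where
  "scons u \<sigma> = (\<lambda>i. case i of 0 \<Rightarrow> u | Suc j \<Rightarrow> \<sigma> j)"

primrec psubst :: "(nat \<Rightarrow> trm) \<Rightarrow> (nat \<Rightarrow> elim list) \<Rightarrow> trm \<Rightarrow> trm"
  and psubstE :: "(nat \<Rightarrow> trm) \<Rightarrow> (nat \<Rightarrow> elim list) \<Rightarrow> elim \<Rightarrow> elim" where
  "psubst \<sigma> \<rho> (LVar i) = \<sigma> i"
| "psubst \<sigma> \<rho> (Lam t) = Lam (psubst (up_l \<sigma>) (lift_stacks_l \<rho>) t)"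
| "psubst \<sigma> \<rho> (App t e) = App (psubst \<sigma> \<rho> t) (psubstE \<sigma> \<rho> e)"
| "psubst \<sigma> \<rho> (Pair t u) = Pair (psubst \<sigma> \<rho> t) (psubst \<sigma> \<rho> u)"
| "psubst \<sigma> \<rho> (Inj1 t) = Inj1 (psubst \<sigma> \<rho> t)"
| "psubst \<sigma> \<rho> (Inj2 t) = Inj2 (psubst \<sigma> \<rho> t)"
| "psubst \<sigma> \<rho> (Mu t) = Mu (psubst (\<lambda>i. lift_m 0 (\<sigma> i)) (up_m \<rho>) t)"
| "psubst \<sigma> \<rho> (MApp a t) = MApp a (apps (psubst \<sigma> \<rho> t) (\<rho> a))"
| "psubstE \<sigma> \<rho> (ETm t) = ETm (psubst \<sigma> \<rho> t)"
| "psubstE \<sigma> \<rho> Proj1 = Proj1"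
| "psubstE \<sigma> \<rho> Proj2 = Proj2"
| "psubstE \<sigma> \<rho> (Case u v) =
    Case (psubst (up_l \<sigma>) (lift_stacks_l \<rho>) u) (psubst (up_l \<sigma>) (lift_stacks_l \<rho>) v)"

lemma psubst_id:
  fixes t :: trm and e :: elim
  shows "psubst LVar (\<lambda>_. []) t = t" and "psubstE LVar (\<lambda>_. []) e = e"
proof -
  have "up_l LVar = LVar" "lift_stacks_l (\<lambda>_. []) = (\<lambda>_. [])" "up_m (\<lambda>_. []) = (\<lambda>_. [])"
    by (auto simp: up_l_def lift_stacks_l_def up_m_def split: nat.splits)
  then show "psubst LVar (\<lambda>_. []) t = t" and "psubstE LVar (\<lambda>_. []) e = e"
    by (induct t and e) auto
qed

lemma up_l_subst:
  "(\<lambda>i. subst (up_l \<sigma> i) (Suc k) (lift_l 0 u)) = up_l (\<lambda>i. subst (\<sigma> i) k u)"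
  by (rule ext) (auto simp: up_l_def lift_l_subst_ge split: nat.splits)

lemma lift_stacks_l_subst:
  "(\<lambda>a. map (\<lambda>e. substE e (Suc k) (lift_l 0 u)) (lift_stacks_l \<rho> a)) =
    lift_stacks_l (\<lambda>a. map (\<lambda>e. substE e k u) (\<rho> a))"
  by (rule ext) (auto simp: lift_stacks_l_def lift_l_subst_ge)

lemma up_m_subst:
  "(\<lambda>a. map (\<lambda>e. substE e k (lift_m 0 u)) (up_m \<rho> a)) = up_m (\<lambda>a. map (\<lambda>e. substE e k u) (\<rho> a))"
  by (rule ext) (auto simp: up_m_def lift_m_subst split: nat.splits)

lemma subst_psubst:
  fixes t :: trm and e :: elim
  shows "\<And>\<sigma> \<rho> k u. subst (psubst \<sigma> \<rho> t) k u =
      psubst (\<lambda>i. subst (\<sigma> i) k u) (\<lambda>a. map (\<lambda>e. substE e k u) (\<rho> a)) t"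
    and "\<And>\<sigma> \<rho> k u. substE (psubstE \<sigma> \<rho> e) k u =
      psubstE (\<lambda>i. subst (\<sigma> i) k u) (\<lambda>a. map (\<lambda>e. substE e k u) (\<rho> a)) e"
  by (induct t and e)
    (simp_all add: up_l_subst lift_stacks_l_subst up_m_subst lift_m_subst subst_apps)

lemma subst_psubst_up_l: "subst (psubst (up_l \<sigma>) (lift_stacks_l \<rho>) t) 0 u = psubst (scons u \<sigma>) \<rho> t"
proof -
  have "(\<lambda>i. subst (up_l \<sigma> i) 0 u) = scons u \<sigma>"
    by (rule ext) (auto simp: up_l_def scons_def subst_lift_l split: nat.splits)
  moreover have "(\<lambda>a. map (\<lambda>e. substE e 0 u) (lift_stacks_l \<rho> a)) = \<rho>"
    by (rule ext) (simp add: lift_stacks_l_def subst_lift_l comp_def)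
  ultimately show ?thesis by (simp add: subst_psubst)
qed

text \<open>\<open>ins_stack k \<rho>\<close> is the environment for a term whose \<open>\<mu>\<close>-variables at or above \<open>k\<close>
  have been shifted by \<open>lift_m k\<close>: the new variable \<open>k\<close> gets the empty stack.\<close>

definition ins_stack :: "nat \<Rightarrow> (nat \<Rightarrow> elim list) \<Rightarrow> nat \<Rightarrow> elim list" where
  "ins_stack k \<rho> = (\<lambda>b. if b < k then map (lift_mE k) (\<rho> b)
     else if b = k then [] else map (lift_mE k) (\<rho> (b - 1)))"

lemma ins_stack_up_m: "ins_stack (Suc k) (up_m \<rho>) = up_m (ins_stack k \<rho>)"
proof (rule ext)
  fix b
  show "ins_stack (Suc k) (up_m \<rho>) b = up_m (ins_stack k \<rho>) b"
    by (cases b) (auto simp: ins_stack_def up_m_def lift_m_lift_m split: nat.splits)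
qed

lemma ins_stack_lift_stacks_l: "ins_stack k (lift_stacks_l \<rho>) = lift_stacks_l (ins_stack k \<rho>)"
  by (rule ext) (auto simp: ins_stack_def lift_stacks_l_def lift_l_lift_m)

lemma ins_stack_0: "ins_stack 0 \<rho> = up_m \<rho>"
  by (rule ext) (auto simp: ins_stack_def up_m_def split: nat.splits)

lemma up_l_lift_m: "(\<lambda>i. lift_m k (up_l \<sigma> i)) = up_l (\<lambda>i. lift_m k (\<sigma> i))"
  by (rule ext) (auto simp: up_l_def lift_l_lift_m split: nat.splits)

lemma lift_m_psubst:
  fixes t :: trm and e :: elim
  shows "\<And>\<sigma> \<rho> k. lift_m k (psubst \<sigma> \<rho> t) =
      psubst (\<lambda>i. lift_m k (\<sigma> i)) (ins_stack k \<rho>) (lift_m k t)"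
    and "\<And>\<sigma> \<rho> k. lift_mE k (psubstE \<sigma> \<rho> e) =
      psubstE (\<lambda>i. lift_m k (\<sigma> i)) (ins_stack k \<rho>) (lift_mE k e)"
proof (induct t and e)
  case (Mu t)
  show ?case by (simp add: Mu ins_stack_up_m lift_m_lift_m)
next
  case (MApp a t)
  show ?case by (simp add: MApp lift_m_apps ins_stack_def)
qed (simp_all add: up_l_lift_m ins_stack_lift_stacks_l)

lemma lift_m0_psubst:
  "lift_m 0 (psubst \<sigma> \<rho> t) = psubst (\<lambda>i. lift_m 0 (\<sigma> i)) (up_m \<rho>) (lift_m 0 t)"
  by (simp add: lift_m_psubst ins_stack_0)

lemma mfresh_up_l: "\<forall>i. mfresh a (\<sigma> i) \<Longrightarrow> \<forall>i. mfresh a (up_l \<sigma> i)"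
  by (auto simp: up_l_def mfresh_lift_l split: nat.splits)

lemma mfresh_lift_stacks_l:
  "\<forall>b. \<forall>x\<in>set (\<rho> b). mfreshE a x \<Longrightarrow> \<forall>b. \<forall>x\<in>set (lift_stacks_l \<rho> b). mfreshE a x"
  by (auto simp: lift_stacks_l_def mfresh_lift_l)

lemma mfresh_up_m:
  "\<forall>b. \<forall>x\<in>set (\<rho> b). mfreshE a x \<Longrightarrow> \<forall>b. \<forall>x\<in>set (up_m \<rho> b). mfreshE (Suc a) x"
  by (auto simp: up_m_def mfresh_lift_m0 split: nat.splits)

lemma lift_stacks_l_snoc:
  "(lift_stacks_l \<rho>)(a := lift_stacks_l \<rho> a @ [lift_lE 0 f]) = lift_stacks_l (\<rho>(a := \<rho> a @ [f]))"
  by (rule ext) (simp add: lift_stacks_l_def)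

lemma up_m_snoc:
  "(up_m \<rho>)(Suc a := up_m \<rho> (Suc a) @ [lift_mE 0 f]) = up_m (\<rho>(a := \<rho> a @ [f]))"
  by (rule ext) (simp add: up_m_def split: nat.splits)

lemma msubst_psubst:
  fixes t :: trm and e :: elim
  shows "\<And>\<sigma> \<rho> a f. \<forall>i. mfresh a (\<sigma> i) \<Longrightarrow> \<forall>b. \<forall>x\<in>set (\<rho> b). mfreshE a x \<Longrightarrow>
      msubst (psubst \<sigma> \<rho> t) a f = psubst \<sigma> (\<rho>(a := \<rho> a @ [f])) t"
    and "\<And>\<sigma> \<rho> a f. \<forall>i. mfresh a (\<sigma> i) \<Longrightarrow> \<forall>b. \<forall>x\<in>set (\<rho> b). mfreshE a x \<Longrightarrow>
      msubstE (psubstE \<sigma> \<rho> e) a f = psubstE \<sigma> (\<rho>(a := \<rho> a @ [f])) e"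
proof (induct t and e)
  case (Lam t)
  show ?case
    using Lam(1)[OF mfresh_up_l[OF Lam(2)] mfresh_lift_stacks_l[OF Lam(3)], of "lift_lE 0 f"]
    by (simp only: psubst.simps msubst.simps lift_stacks_l_snoc)
next
  case (Mu t)
  have "\<forall>i. mfresh (Suc a) (lift_m 0 (\<sigma> i))" using Mu(2) by (simp add: mfresh_lift_m0)
  from Mu(1)[OF this mfresh_up_m[OF Mu(3)], where f = "lift_mE 0 f"] show ?case
    by (simp only: psubst.simps msubst.simps up_m_snoc)
next
  case (MApp b t)
  have "map (\<lambda>e. msubstE e a f) (\<rho> b) = \<rho> b"
    using MApp(3) by (auto simp: msubst_mfresh intro: map_idI)
  then show ?case using MApp by (auto simp: msubst_apps apps_snoc)
next
  case (Case u v)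
  show ?case
    using Case(1,2)[OF mfresh_up_l[OF Case(3)] mfresh_lift_stacks_l[OF Case(4)], of "lift_lE 0 f"]
    by (simp only: psubstE.simps msubstE.simps lift_stacks_l_snoc)
qed (simp_all add: msubst_mfresh)

lemma msubsts_psubst:
  "\<forall>i. mfresh 0 (\<sigma> i) \<Longrightarrow> \<forall>b. \<forall>x\<in>set (\<rho> b). mfreshE 0 x \<Longrightarrow>
     msubsts (psubst \<sigma> \<rho> t) es = psubst \<sigma> (\<rho>(0 := \<rho> 0 @ map (lift_mE 0) es)) t"
proof (induct es arbitrary: \<rho>)
  case (Cons e es)
  have "msubsts (psubst \<sigma> \<rho> t) (e # es) = msubsts (psubst \<sigma> (\<rho>(0 := \<rho> 0 @ [lift_mE 0 e])) t) es"
    using Cons(2,3) by (simp add: msubsts_Cons msubst_psubst)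
  also have "\<dots> = psubst \<sigma> (\<rho>(0 := \<rho> 0 @ map (lift_mE 0) (e # es))) t"
    using Cons(2,3) by (subst Cons(1)) (auto simp: mfresh_lift_m)
  finally show ?case .
qed simp

lemma msubsts_psubst_up_m:
  "msubsts (psubst (\<lambda>i. lift_m 0 (\<sigma> i)) (up_m \<rho>) t) es =
    psubst (\<lambda>i. lift_m 0 (\<sigma> i)) ((up_m \<rho>)(0 := map (lift_mE 0) es)) t"
  by (subst msubsts_psubst) (auto simp: mfresh_lift_m up_m_def split: nat.splits)

section \<open>Reducibility\<close>

text \<open>A type \<open>A\<close> is interpreted by a set \<open>stacks A\<close> of eliminations, and a term \<open>X\<close> is
  reducible, \<open>orth (stacks A) X\<close>, when it is SN in front of every such stack. This also
  quantifies over all \<open>\<mu>\<close>-weakenings \<open>lift_m 0 ^^ n\<close>, since substituted terms are pushed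
  under \<open>\<mu>\<close>-binders.\<close>

definition orth :: "elim list set \<Rightarrow> trm \<Rightarrow> bool" where
  "orth S X \<longleftrightarrow> (\<forall>n. \<forall>es\<in>S. SN (apps ((lift_m 0 ^^ n) X) es))"

definition branch_ok :: "elim list set \<Rightarrow> trm \<Rightarrow> elim list \<Rightarrow> bool" where
  "branch_ok S u es \<longleftrightarrow> (\<forall>n w. orth S w \<longrightarrow>
     SN (apps (subst ((lift_m 0 ^^ n) u) 0 w) (map (lift_mE 0 ^^ n) es)))"

fun stacks :: "ty \<Rightarrow> elim list set" where
  "stacks (TVar n) = {[]}"
| "stacks Bot = {[]}"
| "stacks (Imp A B) = {[]} \<union> {ETm u # es | u es. orth (stacks A) u \<and> es \<in> stacks B}"
| "stacks (Conj A B) = {[]} \<union> {Proj1 # es | es. es \<in> stacks A} \<union> {Proj2 # es | es. es \<in> stacks B}"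
| "stacks (Disj A B) =
    {[]} \<union> {Case u v # es | u v es. branch_ok (stacks A) u es \<and> branch_ok (stacks B) v es}"

lemma lifts_m_LVar [simp]: "(lift_m 0 ^^ n) (LVar i) = LVar i"
  by (induct n) auto

lemma Nil_in_stacks [simp]: "[] \<in> stacks A"
  by (cases A) auto

lemma orth_SN_apps: "orth S X \<Longrightarrow> es \<in> S \<Longrightarrow> SN (apps X es)"
  unfolding orth_def by (metis funpow_0)

lemma orth_SN: "orth (stacks A) X \<Longrightarrow> SN X"
  using orth_SN_apps[OF _ Nil_in_stacks] by simp

lemma orth_lift_m: "orth S X \<Longrightarrow> orth S (lift_m 0 X)"
  unfolding orth_def by (metis funpow_Suc_right o_apply)

lemma orth_App: "orth (stacks B) X \<Longrightarrow> e # es \<in> stacks B \<Longrightarrow> SN (apps (App X e) es)"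
  using orth_SN_apps by (metis apps.simps(2))

lemma branch_ok_lift_m: "branch_ok S u es \<Longrightarrow> branch_ok S (lift_m 0 u) (map (lift_mE 0) es)"
  unfolding branch_ok_def by (metis (no_types, lifting) funpow_Suc_right map_map o_apply)

lemma map_lift_m_stacks: "es \<in> stacks A \<Longrightarrow> map (lift_mE 0) es \<in> stacks A"
  by (induct A arbitrary: es) (auto intro: orth_lift_m branch_ok_lift_m)

lemma map_lifts_m_stacks: "es \<in> stacks A \<Longrightarrow> map (lift_mE 0 ^^ n) es \<in> stacks A"
  by (induct n) (auto simp: map_lift_m_stacks simp flip: map_map)

lemma branch_ok_SN_subst: "branch_ok S u es \<Longrightarrow> orth S w \<Longrightarrow> SN (apps (subst u 0 w) es)"
  unfolding branch_ok_def by (drule spec[of _ 0]) simp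

lemma branch_ok_SN: "branch_ok S u es \<Longrightarrow> orth S (LVar 0) \<Longrightarrow> SN (apps u (map (lift_lE 0) es))"
  by (drule (1) branch_ok_SN_subst) (auto simp flip: subst_apps_lift_l intro: SN_subst)

lemma SN_apps_LVar_stacks: "es \<in> stacks A \<Longrightarrow> SN (apps (LVar x) es)"
proof (induct A arbitrary: es x)
  case (Imp A B)
  from Imp(3) show ?case
    by (auto intro!: SN_apps_LVar_Cons SN_App_LVar_ETm dest: orth_SN Imp(2) simp: SN_LVar)
next
  case (Conj A B)
  from Conj(3) show ?case
    by (auto intro!: SN_apps_LVar_Cons dest: Conj(1,2) simp: SN_App_LVar_Proj SN_LVar)
next
  case (Disj A B)
  have "orth (stacks A) (LVar 0)" "orth (stacks B) (LVar 0)"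
    using Disj(1,2) by (auto simp: orth_def)
  then show ?case
    using Disj(3) by (auto intro!: SN_apps_LVar_Case branch_ok_SN simp: SN_LVar)
qed (auto simp: SN_LVar)

lemma orth_LVar: "orth (stacks A) (LVar x)"
  by (auto simp: orth_def SN_apps_LVar_stacks)

lemma SN_apps_Lam_stacks:
  assumes body: "\<And>u es. orth (stacks A) u \<Longrightarrow> es \<in> stacks B \<Longrightarrow> SN (apps (subst X 0 u) es)"
    and "es \<in> stacks (Imp A B)"
  shows "SN (apps (Lam X) es)"
proof -
  from assms(2) consider "es = []"
    | u es' where "es = ETm u # es'" "orth (stacks A) u" "es' \<in> stacks B"
    by auto
  then show ?thesis
  proof cases
    case 1
    have "SN (subst X 0 (LVar 0))" using body[OF orth_LVar Nil_in_stacks] by simp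
    then show ?thesis using 1 by (auto intro: SN_Lam SN_subst)
  next
    case 2
    then show ?thesis using body by (auto intro: SN_apps_Lam orth_SN)
  qed
qed

lemma SN_apps_Pair_stacks:
  assumes "\<forall>es\<in>stacks A. SN (apps t1 es)" "\<forall>es\<in>stacks B. SN (apps t2 es)"
    and "es \<in> stacks (Conj A B)"
  shows "SN (apps (Pair t1 t2) es)"
proof -
  have "SN t1" "SN t2" using assms(1,2) Nil_in_stacks by fastforce+
  then show ?thesis
    using assms by (auto intro: SN_Pair SN_apps_Pair_Proj1 SN_apps_Pair_Proj2)
qed

lemma SN_apps_Inj1_stacks:
  assumes "orth (stacks A) w" "es \<in> stacks (Disj A B)"
  shows "SN (apps (Inj1 w) es)"
  using assms
  by (auto intro!: SN_Inj1 SN_apps_Inj1_Case branch_ok_SN_subst branch_ok_SN orth_LVar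
      intro: orth_SN)

lemma SN_apps_Inj2_stacks:
  assumes "orth (stacks B) w" "es \<in> stacks (Disj A B)"
  shows "SN (apps (Inj2 w) es)"
  using assms
  by (auto intro!: SN_Inj2 SN_apps_Inj2_Case branch_ok_SN_subst branch_ok_SN orth_LVar
      intro: orth_SN)

lemma lifts_m_lift_l: "(lift_m 0 ^^ n) (lift_l 0 s) = lift_l 0 ((lift_m 0 ^^ n) s)"
  by (induct n) (auto simp: lift_l_lift_m)

lemma size_lifts_m: "size ((lift_m 0 ^^ n) t) = size t"
  by (induct n) (auto simp: size_lift_m)

lemma lifts_m_psubst:
  "(lift_m 0 ^^ n) (psubst \<sigma> \<rho> t) =
    psubst (\<lambda>i. (lift_m 0 ^^ n) (\<sigma> i)) ((up_m ^^ n) \<rho>) ((lift_m 0 ^^ n) t)"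
  by (induct n) (auto simp: lift_m0_psubst)

lemma subst_lifts_m_psubst_up_l:
  "subst ((lift_m 0 ^^ n) (psubst (up_l \<sigma>) (lift_stacks_l \<rho>) u)) 0 w =
    psubst (scons w (\<lambda>i. (lift_m 0 ^^ n) (\<sigma> i))) ((up_m ^^ n) \<rho>) ((lift_m 0 ^^ n) u)"
proof -
  have "(\<lambda>i. (lift_m 0 ^^ n) (up_l \<sigma> i)) = up_l (\<lambda>i. (lift_m 0 ^^ n) (\<sigma> i))"
    by (rule ext) (auto simp: up_l_def lifts_m_lift_l split: nat.splits)
  moreover have "(up_m ^^ n) (lift_stacks_l \<rho>) = lift_stacks_l ((up_m ^^ n) \<rho>)"
    by (induct n) (auto simp: up_m_def lift_stacks_l_def lift_l_lift_m split: nat.splits)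
  ultimately show ?thesis by (simp add: lifts_m_psubst subst_psubst_up_l)
qed

section \<open>Adequacy\<close>

definition ins_ctx :: "nat \<Rightarrow> ty \<Rightarrow> (nat \<Rightarrow> ty) \<Rightarrow> nat \<Rightarrow> ty" where
  "ins_ctx k B \<Delta> = (\<lambda>b. if b < k then \<Delta> b else if b = k then B else \<Delta> (b - 1))"

lemma ext_ctx_ins_ctx: "ext_ctx A (ins_ctx k B \<Delta>) = ins_ctx (Suc k) B (ext_ctx A \<Delta>)"
  by (rule ext) (auto simp: ext_ctx_def ins_ctx_def split: nat.splits)

lemma ins_ctx_0: "ins_ctx 0 B \<Delta> = ext_ctx B \<Delta>"
  by (rule ext) (auto simp: ext_ctx_def ins_ctx_def split: nat.splits)

lemma typing_lift_m: "typing \<Gamma> t A \<Delta> \<Longrightarrow> typing \<Gamma> (lift_m k t) A (ins_ctx k B \<Delta>)"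
proof (induct arbitrary: k rule: typing.induct)
  case (abs_i \<Gamma> t A \<Delta> a)
  then show ?case by (auto intro!: typing.abs_i simp: ins_ctx_def)
next
  case (abs_e \<Gamma> t A \<Delta>)
  then show ?case using abs_e(2)[of "Suc k"] by (auto intro!: typing.abs_e simp: ext_ctx_ins_ctx)
qed (auto intro: typing.intros)

lemma typing_lifts_m:
  "typing \<Gamma> t A \<Delta> \<Longrightarrow> typing \<Gamma> ((lift_m 0 ^^ n) t) A ((ext_ctx Bot ^^ n) \<Delta>)"
  by (induct n) (auto simp flip: ins_ctx_0 intro: typing_lift_m)

definition valid_env :: "(nat \<Rightarrow> ty) \<Rightarrow> (nat \<Rightarrow> ty) \<Rightarrow> (nat \<Rightarrow> trm) \<Rightarrow> (nat \<Rightarrow> elim list) \<Rightarrow> bool"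
  where "valid_env \<Gamma> \<Delta> \<sigma> \<rho> \<longleftrightarrow> (\<forall>i. orth (stacks (\<Gamma> i)) (\<sigma> i)) \<and> (\<forall>a. \<rho> a \<in> stacks (\<Delta> a))"

lemma valid_env_Mu:
  "valid_env \<Gamma> \<Delta> \<sigma> \<rho> \<Longrightarrow> es \<in> stacks A \<Longrightarrow>
    valid_env \<Gamma> (ext_ctx A \<Delta>) (\<lambda>i. lift_m 0 (\<sigma> i)) ((up_m \<rho>)(0 := map (lift_mE 0) es))"
  by (auto simp: valid_env_def orth_lift_m up_m_def ext_ctx_def map_lift_m_stacks split: nat.splits)

lemma valid_env_lifts_m:
  "valid_env \<Gamma> \<Delta> \<sigma> \<rho> \<Longrightarrow>
    valid_env \<Gamma> ((ext_ctx Bot ^^ n) \<Delta>) (\<lambda>i. (lift_m 0 ^^ n) (\<sigma> i)) ((up_m ^^ n) \<rho>)"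
proof (induct n)
  case (Suc n)
  have "(up_m \<rho>')(0 := map (lift_mE 0) []) = up_m \<rho>'" for \<rho>'
    by (rule ext) (simp add: up_m_def)
  then show ?case using valid_env_Mu[OF Suc(1)[OF Suc(2)] Nil_in_stacks, of Bot] by simp
qed simp

lemma valid_env_scons:
  "valid_env \<Gamma> \<Delta> \<sigma> \<rho> \<Longrightarrow> orth (stacks A) u \<Longrightarrow> valid_env (ext_ctx A \<Gamma>) \<Delta> (scons u \<sigma>) \<rho>"
  by (auto simp: valid_env_def scons_def ext_ctx_def split: nat.splits)

lemma branch_ok_psubst:
  assumes "\<And>n w. orth S w \<Longrightarrow> SN (apps (psubst (scons w (\<lambda>i. (lift_m 0 ^^ n) (\<sigma> i)))
      ((up_m ^^ n) \<rho>) ((lift_m 0 ^^ n) u)) (map (lift_mE 0 ^^ n) es))"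
  shows "branch_ok S (psubst (up_l \<sigma>) (lift_stacks_l \<rho>) u) es"
  using assms by (simp add: branch_ok_def subst_lifts_m_psubst_up_l)

lemma adequacy:
  "typing \<Gamma> t A \<Delta> \<Longrightarrow> valid_env \<Gamma> \<Delta> \<sigma> \<rho> \<Longrightarrow> es \<in> stacks A \<Longrightarrow> SN (apps (psubst \<sigma> \<rho> t) es)"
proof (induct "size t" arbitrary: t \<Gamma> A \<Delta> \<sigma> \<rho> es rule: less_induct)
  case less
  note IH = less(1) and env = less(3) and es = less(4)
  have orth_IH: "orth (stacks A') (psubst \<sigma>' \<rho>' t')"
    if "size t' < size t" "typing \<Gamma>' t' A' \<Delta>'" "valid_env \<Gamma>' \<Delta>' \<sigma>' \<rho>'" for t' \<Gamma>' A' \<Delta>' \<sigma>' \<rho>'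
    unfolding orth_def lifts_m_psubst
    using IH[OF _ typing_lifts_m[OF that(2)] valid_env_lifts_m[OF that(3)]] that(1)
    by (simp add: size_lifts_m)
  from less(2) show ?case
  proof cases
    case (ax x)
    then show ?thesis using env es by (auto simp: valid_env_def intro: orth_SN_apps)
  next
    case (imp_i A1 s B)
    have "SN (apps (subst (psubst (up_l \<sigma>) (lift_stacks_l \<rho>) s) 0 u) es')"
      if "orth (stacks A1) u" "es' \<in> stacks B" for u es'
      unfolding subst_psubst_up_l using imp_i that
      by (intro IH[OF _ _ valid_env_scons[OF env]]) auto
    from SN_apps_Lam_stacks[OF this, where es = es] show ?thesis using imp_i es by simp
  next
    case (imp_e u A1 v)
    then show ?thesis using es env by (auto intro!: orth_App orth_IH)
  next
    case (conj_i u A1 v B1)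
    then show ?thesis
      using es IH[of u] IH[of v] env by (auto intro!: SN_apps_Pair_stacks)
  next
    case (conj_e1 s B1)
    have "orth (stacks (Conj A B1)) (psubst \<sigma> \<rho> s)" using conj_e1 env by (intro orth_IH) auto
    from orth_App[OF this, of Proj1 es] show ?thesis using conj_e1 es by simp
  next
    case (conj_e2 s A1)
    have "orth (stacks (Conj A1 A)) (psubst \<sigma> \<rho> s)" using conj_e2 env by (intro orth_IH) auto
    from orth_App[OF this, of Proj2 es] show ?thesis using conj_e2 es by simp
  next
    case (disj_i1 s A1 B1)
    then show ?thesis using es orth_IH[of s] env by (auto intro!: SN_apps_Inj1_stacks)
  next
    case (disj_i2 s B1 A1)
    then show ?thesis using es orth_IH[of s] env by (auto intro!: SN_apps_Inj2_stacks)
  next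
    case (disj_e s A1 B1 u v)
    have "branch_ok (stacks A2) (psubst (up_l \<sigma>) (lift_stacks_l \<rho>) u') es"
      if "typing (ext_ctx A2 \<Gamma>) u' A \<Delta>" "size u' < size t" for A2 u'
      using that es env
      by (intro branch_ok_psubst IH) (auto simp: size_lifts_m
          intro: typing_lifts_m valid_env_scons valid_env_lifts_m map_lifts_m_stacks)
    then have stack: "Case (psubst (up_l \<sigma>) (lift_stacks_l \<rho>) u)
        (psubst (up_l \<sigma>) (lift_stacks_l \<rho>) v) # es \<in> stacks (Disj A1 B1)"
      using disj_e by simp
    have "orth (stacks (Disj A1 B1)) (psubst \<sigma> \<rho> s)"
      using disj_e env by (intro orth_IH) auto
    from orth_App[OF this stack] show ?thesis using disj_e(1) by simp
  next
    case (abs_i s a)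
    then show ?thesis using es env IH[of s] by (auto simp: valid_env_def intro!: SN_MApp)
  next
    case (abs_e s)
    have "SN (psubst (\<lambda>i. lift_m 0 (\<sigma> i)) ((up_m \<rho>)(0 := map (lift_mE 0) es)) s)"
      using abs_e IH[OF _ _ valid_env_Mu[OF env es] Nil_in_stacks] by auto
    then show ?thesis
      using abs_e es by (auto intro!: SN_apps_Mu SN_apps_LVar_stacks simp: msubsts_psubst_up_m)
  qed
qed

theorem typing_SN: "typing \<Gamma> t A \<Delta> \<Longrightarrow> SN t"
proof -
  assume "typing \<Gamma> t A \<Delta>"
  moreover have "valid_env \<Gamma> \<Delta> LVar (\<lambda>_. [])" by (simp add: valid_env_def orth_LVar)
  ultimately have "SN (apps (psubst LVar (\<lambda>_. []) t) [])" by (rule adequacy) simp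
  then show ?thesis by (simp add: psubst_id)
qed

theorem theorem3:
  assumes "typing \<Gamma> t A \<Delta>"
  shows "\<not> (\<exists>f :: nat \<Rightarrow> trm. f 0 = t \<and> (\<forall>i. red (f i) (f (Suc i))))"
  using SN_no_infinite_red[OF typing_SN[OF assms]] .

end
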